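(* Under the hypotheses of the preceding lemma (a defining map $s_\alpha$ for $\Lambda\subset(M,g)$, $m\in\mathbb Z_{\ge2}$, $G_{\alpha\beta}=\delta_{\alpha\beta}+\mathcal O(s^2)$, and $n^{a_1\cdots a_{n-1}}_{(\alpha_1\cdots\alpha_{n-1}}\nabla_{a_1\cdots a_{n-1}b}G_{\gamma\delta)}=0=n^{a_1\cdots a_n}_{(\alpha_1\cdots\alpha_n}\nabla_{a_1\cdots a_n}G_{\gamma)\delta}$ on $\Lambda$ for all $2\le n\le m$), for every $1\le p\le m$ we have on $\Lambda$ $$n^{a_1\cdots a_p}_{(\alpha_1\cdots\alpha_p}\nabla_{a_1\cdots a_p}n^b_{\beta)}=0.$$
   Context: $(M,g)$ Riemannian with Levi-Civita connection $\nabla$. A defining map is a $k$-tuple $s_\alpha$ vanishing exactly on $\Lambda$ with independent differentials there; $n_{a\alpha}:=\nabla_as_\alpha$; $G_{\alpha\beta}=g^{ab}\nabla_as_\alpha\nabla_bs_\beta$; $\mathcal O(s^2)$ = finite sum of terms $s_\gamma s_\delta T$ with $T$ smooth. Notation: $n^{a_1\cdots a_n}_{\alpha_1\cdots\alpha_n}:=n^{a_1}_{\alpha_1}\cdots n^{a_n}_{\alpha_n}$, $\nabla_{a_1\cdots a_n}:=\nabla_{a_1}\cdots\nabla_{a_n}$; round brackets denote unit-normalized symmetrization over the enclosed Greek indices. *)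

theory Defs
  imports "HOL-Analysis.Analysis" "HOL-Combinatorics.Permutations"
begin

text \<open>Local-coordinate model: the Riemannian manifold is an open set U of
real^'n (a coordinate chart), Latin (tangent) indices range over the finite
type 'n, Greek indices (components of the defining map) over the finite type 'k.\<close>

definition pd :: "'n::finite \<Rightarrow> (real^'n \<Rightarrow> real) \<Rightarrow> real^'n \<Rightarrow> real" where
  "pd i f x = frechet_derivative f (at x) (axis i 1)"

fun pdl :: "'n::finite list \<Rightarrow> (real^'n \<Rightarrow> real) \<Rightarrow> real^'n \<Rightarrow> real" where
  "pdl [] f = f"
| "pdl (i # is) f = pd i (pdl is f)"

definition smooth_on :: "(real^'n::finite) set \<Rightarrow> (real^'n \<Rightarrow> real) \<Rightarrow> bool" where
  "smooth_on U f \<longleftrightarrow> (\<forall>is. \<forall>x\<in>U. pdl is f differentiable (at x))"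

definition riem_metric :: "(real^'n::finite) set \<Rightarrow> (real^'n \<Rightarrow> 'n \<Rightarrow> 'n \<Rightarrow> real) \<Rightarrow> bool" where
  "riem_metric U g \<longleftrightarrow> open U \<and>
     (\<forall>i j. smooth_on U (\<lambda>x. g x i j)) \<and>
     (\<forall>x\<in>U. \<forall>i j. g x i j = g x j i) \<and>
     (\<forall>x\<in>U. \<forall>v::real^'n. v \<noteq> 0 \<longrightarrow> (\<Sum>i\<in>UNIV. \<Sum>j\<in>UNIV. v$i * v$j * g x i j) > 0)"

definition ginv :: "(real^'n::finite \<Rightarrow> 'n \<Rightarrow> 'n \<Rightarrow> real) \<Rightarrow> real^'n \<Rightarrow> 'n \<Rightarrow> 'n \<Rightarrow> real" where
  "ginv g x a b = matrix_inv (\<chi> i j. g x i j) $ a $ b"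

definition christoffel :: "(real^'n::finite \<Rightarrow> 'n \<Rightarrow> 'n \<Rightarrow> real) \<Rightarrow> real^'n \<Rightarrow> 'n \<Rightarrow> 'n \<Rightarrow> 'n \<Rightarrow> real" where
  "christoffel g x c a b = (1/2) * (\<Sum>d\<in>UNIV. ginv g x c d *
      (pd a (\<lambda>y. g y b d) x + pd b (\<lambda>y. g y a d) x - pd d (\<lambda>y. g y a b) x))"

text \<open>A mixed tensor field T: T ups lows x is the component with upper indices
ups and lower indices lows at the point x.  The Levi-Civita covariant derivative
adds one lower index in front: (nabla T)^{ups}_{a lows} = nabla_a T^{ups}_{lows}.\<close>
type_synonym 'n tensor = "'n list \<Rightarrow> 'n list \<Rightarrow> real^'n \<Rightarrow> real"

definition nabla :: "(real^'n::finite \<Rightarrow> 'n \<Rightarrow> 'n \<Rightarrow> real) \<Rightarrow> 'n tensor \<Rightarrow> 'n tensor" where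
  "nabla g T ups lows x = (case lows of [] \<Rightarrow> 0 | a # ls \<Rightarrow>
      pd a (T ups ls) x
      + (\<Sum>i<length ups. \<Sum>c\<in>UNIV. christoffel g x (ups ! i) a c * T (ups[i := c]) ls x)
      - (\<Sum>j<length ls. \<Sum>c\<in>UNIV. christoffel g x c a (ls ! j) * T ups (ls[j := c]) x))"

definition nablas :: "(real^'n::finite \<Rightarrow> 'n \<Rightarrow> 'n \<Rightarrow> real) \<Rightarrow> nat \<Rightarrow> 'n tensor \<Rightarrow> 'n tensor" where
  "nablas g k T = (nabla g ^^ k) T"

definition nlow :: "('k \<Rightarrow> real^'n::finite \<Rightarrow> real) \<Rightarrow> real^'n \<Rightarrow> 'n \<Rightarrow> 'k \<Rightarrow> real" where
  "nlow s x a \<alpha> = pd a (s \<alpha>) x"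

definition nup :: "(real^'n::finite \<Rightarrow> 'n \<Rightarrow> 'n \<Rightarrow> real) \<Rightarrow> ('k \<Rightarrow> real^'n \<Rightarrow> real) \<Rightarrow> real^'n \<Rightarrow> 'n \<Rightarrow> 'k \<Rightarrow> real" where
  "nup g s x a \<alpha> = (\<Sum>b\<in>UNIV. ginv g x a b * nlow s x b \<alpha>)"

text \<open>The vector field n^b_beta as a (1,0)-tensor field (only its component
with one upper index is meaningful).\<close>
definition nup_tensor :: "(real^'n::finite \<Rightarrow> 'n \<Rightarrow> 'n \<Rightarrow> real) \<Rightarrow> ('k \<Rightarrow> real^'n \<Rightarrow> real) \<Rightarrow> 'k \<Rightarrow> 'n tensor" where
  "nup_tensor g s \<beta> ups lows x = nup g s x (hd ups) \<beta>"

definition Gmat :: "(real^'n::finite \<Rightarrow> 'n \<Rightarrow> 'n \<Rightarrow> real) \<Rightarrow> ('k \<Rightarrow> real^'n \<Rightarrow> real) \<Rightarrow> 'k \<Rightarrow> 'k \<Rightarrow> real^'n \<Rightarrow> real" where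
  "Gmat g s \<alpha> \<beta> x = (\<Sum>a\<in>UNIV. \<Sum>b\<in>UNIV. ginv g x a b * nlow s x a \<alpha> * nlow s x b \<beta>)"

definition G_tensor :: "(real^'n::finite \<Rightarrow> 'n \<Rightarrow> 'n \<Rightarrow> real) \<Rightarrow> ('k \<Rightarrow> real^'n \<Rightarrow> real) \<Rightarrow> 'k \<Rightarrow> 'k \<Rightarrow> 'n tensor" where
  "G_tensor g s \<alpha> \<beta> ups lows x = Gmat g s \<alpha> \<beta> x"

definition defining_map :: "(real^'n::finite) set \<Rightarrow> ('k::finite \<Rightarrow> real^'n \<Rightarrow> real) \<Rightarrow> (real^'n) set \<Rightarrow> bool" where
  "defining_map U s \<Lambda> \<longleftrightarrow> (\<forall>\<alpha>. smooth_on U (s \<alpha>)) \<and>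
     \<Lambda> = {x\<in>U. \<forall>\<alpha>. s \<alpha> x = 0} \<and>
     (\<forall>x\<in>\<Lambda>. \<forall>c::'k \<Rightarrow> real. (\<forall>a. (\<Sum>\<alpha>\<in>UNIV. c \<alpha> * pd a (s \<alpha>) x) = 0) \<longrightarrow> (\<forall>\<alpha>. c \<alpha> = 0))"

definition O_s2 :: "(real^'n::finite) set \<Rightarrow> ('k::finite \<Rightarrow> real^'n \<Rightarrow> real) \<Rightarrow> (real^'n \<Rightarrow> real) \<Rightarrow> bool" where
  "O_s2 U s f \<longleftrightarrow> (\<exists>T::'k \<Rightarrow> 'k \<Rightarrow> real^'n \<Rightarrow> real.
     (\<forall>\<gamma> \<delta>. smooth_on U (T \<gamma> \<delta>)) \<and>
     (\<forall>x\<in>U. f x = (\<Sum>\<gamma>\<in>UNIV. \<Sum>\<delta>\<in>UNIV. s \<gamma> x * s \<delta> x * T \<gamma> \<delta> x)))"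

definition symmetrize :: "('k list \<Rightarrow> real) \<Rightarrow> 'k list \<Rightarrow> real" where
  "symmetrize f \<alpha>s = (1 / fact (length \<alpha>s)) *
     (\<Sum>\<sigma>\<in>{\<sigma>. \<sigma> permutes {..<length \<alpha>s}}. f (map (\<lambda>i. \<alpha>s ! \<sigma> i) [0..<length \<alpha>s]))"

definition nprod :: "(real^'n::finite \<Rightarrow> 'n \<Rightarrow> 'n \<Rightarrow> real) \<Rightarrow> ('k \<Rightarrow> real^'n \<Rightarrow> real) \<Rightarrow> real^'n \<Rightarrow> 'n list \<Rightarrow> 'k list \<Rightarrow> real" where
  "nprod g s x as \<beta>s = (\<Prod>i<length as. nup g s x (as ! i) (\<beta>s ! i))"

end

theory Submission
  imports Defs
begin

text \<open>Hypotheses and conclusion are symmetrized in the Greek indices, so by polarization it suffices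
  to contract every Greek slot with an arbitrary vector \<open>v\<close>. Put \<open>w\<^sup>a = v\<^sup>\<gamma> n\<^sup>a\<^sub>\<gamma>\<close> and
  \<open>w\<^sub>a = v\<^sup>\<gamma> \<nabla>\<^sub>a s\<^sub>\<gamma>\<close>. Then \<open>w\<^sup>c w\<^sub>c = v\<^sup>\<gamma> v\<^sup>\<delta> G\<^sub>\<gamma>\<^sub>\<delta>\<close>, the conclusion becomes
  \<open>w\<^sup>a\<^sup>1 \<cdots> w\<^sup>a\<^sup>p \<nabla>\<^sub>a\<^sub>1\<^sub>\<cdots>\<^sub>a\<^sub>p w\<^sup>b = 0\<close>, and the first family of hypotheses becomes
  \<open>w\<^sup>a\<^sup>1 \<cdots> w\<^sup>a\<^sup>p\<^sup>-\<^sup>1 \<nabla>\<^sub>a\<^sub>1\<^sub>\<cdots>\<^sub>a\<^sub>p\<^sub>-\<^sub>1\<^sub>b (w\<^sup>c w\<^sub>c) = 0\<close>; for \<open>p = 1\<close> this follows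
  from \<open>G = \<delta> + O(s\<^sup>2)\<close>. Expanding the latter by the Leibniz rule, all terms containing
  lower-order derivatives of \<open>w\<close> along \<open>w\<close> vanish by induction on \<open>p\<close>, and the two remaining
  terms both equal \<open>w\<^sup>a\<^sup>1 \<cdots> w\<^sup>a\<^sup>p \<nabla>\<^sub>a\<^sub>1\<^sub>\<cdots>\<^sub>a\<^sub>p w\<^sub>b\<close>, because \<open>\<nabla>\<^sub>a w\<^sub>b\<close> is symmetric
  (\<open>w\<^sub>b\<close> is a gradient) and raising an index commutes with \<open>\<nabla>\<close>.\<close>

lemma pd_eqI:
  assumes "(f has_derivative D) (at x)"
  shows "pd i f x = D (axis i 1)"
  using frechet_derivative_at[OF assms] unfolding pd_def by simp

lemma has_derivative_frechet_derivative:
  "f differentiable (at x) \<Longrightarrow> (f has_derivative frechet_derivative f (at x)) (at x)"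
  by (simp add: frechet_derivative_works[symmetric])

lemma pd_transform_open:
  assumes "open U" "x \<in> U" "\<And>y. y \<in> U \<Longrightarrow> f y = h y"
  shows "pd i f x = pd i h x"
proof -
  have "(f has_derivative D) (at x) \<longleftrightarrow> (h has_derivative D) (at x)" for D
    using has_derivative_transform_within_open[OF _ assms(1,2), of f D UNIV h]
          has_derivative_transform_within_open[OF _ assms(1,2), of h D UNIV f] assms(3)
    by auto
  then show ?thesis unfolding pd_def frechet_derivative_def by simp
qed

lemma differentiable_transform_open:
  assumes "f differentiable (at x)" "open U" "x \<in> U" "\<And>y. y \<in> U \<Longrightarrow> f y = h y"
  shows "h differentiable (at x)"
proof -
  obtain D where "(f has_derivative D) (at x)" using assms(1) unfolding differentiable_def by blast
  then have "(h has_derivative D) (at x)"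
    by (rule has_derivative_transform_within_open[OF _ assms(2,3)]) (rule assms(4))
  then show ?thesis unfolding differentiable_def by blast
qed

lemma pdl_transform_open:
  assumes "open U" "x \<in> U" "\<And>y. y \<in> U \<Longrightarrow> f y = h y"
  shows "pdl ks f x = pdl ks h x"
  using assms(2)
proof (induction ks arbitrary: x)
  case Nil then show ?case using assms(3) by simp
next
  case (Cons i ks)
  then show ?case by (simp only: pdl.simps) (rule pd_transform_open[OF assms(1) Cons.prems Cons.IH])
qed

lemma pdl_snoc: "pdl (ks @ [i]) f = pdl ks (pd i f)"
  by (induction ks) auto

lemma pd_const: "pd i (\<lambda>y. c) x = 0"
  by (rule pd_eqI[of _ "\<lambda>v. 0", THEN trans]) simp_all

lemma pd_add:
  assumes "f differentiable (at x)" "h differentiable (at x)"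
  shows "pd i (\<lambda>y. f y + h y) x = pd i f x + pd i h x"
  by (rule pd_eqI[OF has_derivative_add[OF assms[THEN has_derivative_frechet_derivative]], THEN trans])
    (simp add: pd_def)

lemma pd_diff:
  assumes "f differentiable (at x)" "h differentiable (at x)"
  shows "pd i (\<lambda>y. f y - h y) x = pd i f x - pd i h x"
  by (rule pd_eqI[OF has_derivative_diff[OF assms[THEN has_derivative_frechet_derivative]], THEN trans])
    (simp add: pd_def)

lemma pd_mult:
  assumes "f differentiable (at x)" "h differentiable (at x)"
  shows "pd i (\<lambda>y. f y * h y) x = pd i f x * h x + f x * pd i h x"
  by (rule pd_eqI[OF has_derivative_mult[OF assms[THEN has_derivative_frechet_derivative]], THEN trans])
    (simp add: pd_def)

lemma pd_cmult:
  assumes "f differentiable (at x)"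
  shows "pd i (\<lambda>y. c * f y) x = c * pd i f x"
  using pd_mult[OF differentiable_const assms] by (simp add: pd_const)

lemma pd_inverse:
  assumes "f differentiable (at x)" "f x \<noteq> 0"
  shows "pd i (\<lambda>y. inverse (f y)) x = - (pd i f x * inverse (f x) * inverse (f x))"
  using Deriv.has_derivative_inverse[OF assms(2) has_derivative_frechet_derivative[OF assms(1)]]
  by (rule pd_eqI[THEN trans]) (simp add: pd_def)

lemma pd_sum:
  assumes "\<And>j. j \<in> J \<Longrightarrow> f j differentiable (at x)"
  shows "pd i (\<lambda>y. \<Sum>j\<in>J. f j y) x = (\<Sum>j\<in>J. pd i (f j) x)"
proof -
  have "((\<lambda>y. \<Sum>j\<in>J. f j y) has_derivative (\<lambda>v. \<Sum>j\<in>J. frechet_derivative (f j) (at x) v)) (at x)"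
    using assms by (intro has_derivative_sum has_derivative_frechet_derivative)
  then show ?thesis by (rule pd_eqI[THEN trans]) (simp add: pd_def)
qed

lemma pd_mult_mult_eq_0:
  assumes "f differentiable (at x)" "h differentiable (at x)" "T differentiable (at x)" "f x = 0" "h x = 0"
  shows "pd b (\<lambda>y. f y * h y * T y) x = 0"
  using assms by (simp add: pd_mult differentiable_mult)

definition smooth_upto :: "nat \<Rightarrow> (real^'n::finite) set \<Rightarrow> (real^'n \<Rightarrow> real) \<Rightarrow> bool" where
  "smooth_upto k U f \<longleftrightarrow> (\<forall>ks::'n list. length ks \<le> k \<longrightarrow> (\<forall>x\<in>U. pdl ks f differentiable (at x)))"

lemma smooth_upto_0: "smooth_upto 0 U f \<longleftrightarrow> (\<forall>x\<in>U. f differentiable (at x))"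
  unfolding smooth_upto_def by simp

lemma smooth_upto_Suc:
  fixes f :: "real^'n::finite \<Rightarrow> real"
  shows "smooth_upto (Suc k) U f \<longleftrightarrow>
           (\<forall>x\<in>U. f differentiable (at x)) \<and> (\<forall>i. smooth_upto k U (pd i f))"
proof
  assume f: "smooth_upto (Suc k) U f"
  have "smooth_upto k U (pd i f)" for i
    unfolding smooth_upto_def
  proof (intro allI impI ballI)
    fix ks :: "'n list" and x assume "length ks \<le> k" "x \<in> U"
    then show "pdl ks (pd i f) differentiable (at x)"
      using f[unfolded smooth_upto_def, rule_format, of "ks @ [i]" x] by (simp add: pdl_snoc)
  qed
  moreover have "\<forall>x\<in>U. f differentiable (at x)"
    using f[unfolded smooth_upto_def, rule_format, of "[]"] by simp
  ultimately show "(\<forall>x\<in>U. f differentiable (at x)) \<and> (\<forall>i. smooth_upto k U (pd i f))"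
    by blast
next
  assume f: "(\<forall>x\<in>U. f differentiable (at x)) \<and> (\<forall>i. smooth_upto k U (pd i f))"
  show "smooth_upto (Suc k) U f"
    unfolding smooth_upto_def
  proof (intro allI impI ballI)
    fix ks :: "'n list" and x assume "length ks \<le> Suc k" "x \<in> U"
    then show "pdl ks f differentiable (at x)"
    proof (cases ks rule: rev_cases)
      case Nil
      then show ?thesis using f \<open>x \<in> U\<close> by simp
    next
      case (snoc js i)
      then have "length js \<le> k" using \<open>length ks \<le> Suc k\<close> by simp
      then show ?thesis using f \<open>x \<in> U\<close> unfolding snoc smooth_upto_def pdl_snoc by blast
    qed
  qed
qed

lemma smooth_upto_mono: "smooth_upto k U f \<Longrightarrow> j \<le> k \<Longrightarrow> smooth_upto j U f"
  unfolding smooth_upto_def by auto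

lemma smooth_on_iff_smooth_upto: "smooth_on U f \<longleftrightarrow> (\<forall>k. smooth_upto k U f)"
  unfolding smooth_on_def smooth_upto_def by (metis le_refl)

lemma smooth_upto_transform_open:
  fixes f :: "real^'n::finite \<Rightarrow> real"
  assumes U: "open U" and f: "smooth_upto k U f" and eq: "\<And>y. y \<in> U \<Longrightarrow> f y = h y"
  shows "smooth_upto k U h"
  unfolding smooth_upto_def
proof (intro allI impI ballI)
  fix ks :: "'n list" and x assume "length ks \<le> k" "x \<in> U"
  then have "pdl ks f differentiable (at x)" using f unfolding smooth_upto_def by blast
  then show "pdl ks h differentiable (at x)"
    by (rule differentiable_transform_open[OF _ U \<open>x \<in> U\<close>]) (rule pdl_transform_open[OF U _ eq])
qed

lemma smooth_upto_const:
  fixes U :: "(real^'n::finite) set"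
  shows "smooth_upto k U (\<lambda>x. c)"
proof (induction k arbitrary: c)
  case (Suc k)
  have "pd i (\<lambda>x. c) = (\<lambda>x. 0)" for i :: 'n by (simp add: fun_eq_iff pd_const)
  then show ?case using Suc.IH by (simp add: smooth_upto_Suc)
qed (simp add: smooth_upto_0)

lemma smooth_upto_add:
  assumes U: "open U"
  shows "smooth_upto k U f \<Longrightarrow> smooth_upto k U h \<Longrightarrow> smooth_upto k U (\<lambda>x. f x + h x)"
proof (induction k arbitrary: f h)
  case 0 then show ?case unfolding smooth_upto_0 by (blast intro: differentiable_add)
next
  case (Suc k)
  have d: "\<forall>x\<in>U. f differentiable (at x)" "\<forall>x\<in>U. h differentiable (at x)"
    using Suc.prems unfolding smooth_upto_Suc by blast+
  have "smooth_upto k U (pd i (\<lambda>x. f x + h x))" for i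
  proof (rule smooth_upto_transform_open[OF U])
    show "smooth_upto k U (\<lambda>x. pd i f x + pd i h x)"
      using Suc.prems unfolding smooth_upto_Suc by (blast intro: Suc.IH)
    show "pd i f y + pd i h y = pd i (\<lambda>x. f x + h x) y" if "y \<in> U" for y
      using d that by (simp add: pd_add)
  qed
  then show ?case using d unfolding smooth_upto_Suc by (blast intro: differentiable_add)
qed

lemma smooth_upto_minus:
  assumes U: "open U"
  shows "smooth_upto k U f \<Longrightarrow> smooth_upto k U (\<lambda>x. - f x)"
proof (induction k arbitrary: f)
  case 0 then show ?case unfolding smooth_upto_0 by (blast intro: differentiable_minus)
next
  case (Suc k)
  have d: "\<forall>x\<in>U. f differentiable (at x)" using Suc.prems unfolding smooth_upto_Suc by blast
  have "smooth_upto k U (pd i (\<lambda>x. - f x))" for i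
  proof (rule smooth_upto_transform_open[OF U])
    show "smooth_upto k U (\<lambda>x. - pd i f x)"
      using Suc.prems unfolding smooth_upto_Suc by (blast intro: Suc.IH)
    show "- pd i f y = pd i (\<lambda>x. - f x) y" if "y \<in> U" for y
      using d that pd_cmult[of f y i "-1"] by simp
  qed
  then show ?case using d unfolding smooth_upto_Suc by (blast intro: differentiable_minus)
qed

lemma smooth_upto_mult:
  assumes U: "open U"
  shows "smooth_upto k U f \<Longrightarrow> smooth_upto k U h \<Longrightarrow> smooth_upto k U (\<lambda>x. f x * h x)"
proof (induction k arbitrary: f h)
  case 0 then show ?case unfolding smooth_upto_0 by (blast intro: differentiable_mult)
next
  case (Suc k)
  have d: "\<forall>x\<in>U. f differentiable (at x)" "\<forall>x\<in>U. h differentiable (at x)"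
    using Suc.prems unfolding smooth_upto_Suc by blast+
  have f: "smooth_upto k U f" "smooth_upto k U h"
    using Suc.prems smooth_upto_mono[of "Suc k" U _ k] by simp_all
  have pd: "smooth_upto k U (pd i f)" "smooth_upto k U (pd i h)" for i
    using Suc.prems unfolding smooth_upto_Suc by blast+
  have "smooth_upto k U (pd i (\<lambda>x. f x * h x))" for i
  proof (rule smooth_upto_transform_open[OF U])
    show "smooth_upto k U (\<lambda>x. pd i f x * h x + f x * pd i h x)"
      by (intro smooth_upto_add[OF U] Suc.IH f pd)
    show "pd i f y * h y + f y * pd i h y = pd i (\<lambda>x. f x * h x) y" if "y \<in> U" for y
      using d that by (simp add: pd_mult)
  qed
  then show ?case using d unfolding smooth_upto_Suc by (blast intro: differentiable_mult)
qed

lemma smooth_upto_inverse: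
  assumes U: "open U"
  shows "smooth_upto k U f \<Longrightarrow> (\<forall>x\<in>U. f x \<noteq> 0) \<Longrightarrow> smooth_upto k U (\<lambda>x. inverse (f x))"
proof (induction k arbitrary: f)
  case 0 then show ?case unfolding smooth_upto_0 by (blast intro: differentiable_inverse)
next
  case (Suc k)
  have d: "\<forall>x\<in>U. f differentiable (at x)" using Suc.prems unfolding smooth_upto_Suc by blast
  have inv: "smooth_upto k U (\<lambda>x. inverse (f x))"
    using Suc.IH[of f] Suc.prems smooth_upto_mono[of "Suc k" U f k] by simp
  have "smooth_upto k U (pd i (\<lambda>x. inverse (f x)))" for i
  proof (rule smooth_upto_transform_open[OF U])
    have "smooth_upto k U (pd i f)" using Suc.prems unfolding smooth_upto_Suc by blast
    then show "smooth_upto k U (\<lambda>x. - (pd i f x * inverse (f x) * inverse (f x)))"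
      by (intro smooth_upto_minus[OF U] smooth_upto_mult[OF U] inv)
    show "- (pd i f y * inverse (f y) * inverse (f y)) = pd i (\<lambda>x. inverse (f x)) y" if "y \<in> U" for y
      using d Suc.prems(2) that by (simp add: pd_inverse)
  qed
  then show ?case using d Suc.prems(2) unfolding smooth_upto_Suc by (blast intro: differentiable_inverse)
qed

lemma smooth_on_const: "smooth_on U (\<lambda>x. c)"
  by (simp add: smooth_on_iff_smooth_upto smooth_upto_const)

lemma smooth_on_add: "open U \<Longrightarrow> smooth_on U f \<Longrightarrow> smooth_on U h \<Longrightarrow> smooth_on U (\<lambda>x. f x + h x)"
  by (simp add: smooth_on_iff_smooth_upto smooth_upto_add)

lemma smooth_on_diff: "open U \<Longrightarrow> smooth_on U f \<Longrightarrow> smooth_on U h \<Longrightarrow> smooth_on U (\<lambda>x. f x - h x)"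
  using smooth_on_add[of U f "\<lambda>x. - h x"] by (simp add: smooth_on_iff_smooth_upto smooth_upto_minus)

lemma smooth_on_mult: "open U \<Longrightarrow> smooth_on U f \<Longrightarrow> smooth_on U h \<Longrightarrow> smooth_on U (\<lambda>x. f x * h x)"
  by (simp add: smooth_on_iff_smooth_upto smooth_upto_mult)

lemma smooth_on_inverse:
  "open U \<Longrightarrow> smooth_on U f \<Longrightarrow> (\<forall>x\<in>U. f x \<noteq> 0) \<Longrightarrow> smooth_on U (\<lambda>x. inverse (f x))"
  by (simp add: smooth_on_iff_smooth_upto smooth_upto_inverse)

lemma smooth_on_sum:
  assumes "open U"
  shows "(\<And>j. j \<in> J \<Longrightarrow> smooth_on U (f j)) \<Longrightarrow> smooth_on U (\<lambda>x. \<Sum>j\<in>J. f j x)"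
  by (induction J rule: infinite_finite_induct) (simp_all add: smooth_on_const smooth_on_add[OF assms])

lemma smooth_on_prod:
  assumes "open U"
  shows "(\<And>j. j \<in> J \<Longrightarrow> smooth_on U (f j)) \<Longrightarrow> smooth_on U (\<lambda>x. \<Prod>j\<in>J. f j x)"
  by (induction J rule: infinite_finite_induct) (simp_all add: smooth_on_const smooth_on_mult[OF assms])

lemma smooth_on_pd: "smooth_on U f \<Longrightarrow> smooth_on U (pd i f)"
  unfolding smooth_on_iff_smooth_upto using smooth_upto_Suc by blast

lemma smooth_on_imp_differentiable: "smooth_on U f \<Longrightarrow> x \<in> U \<Longrightarrow> f differentiable (at x)"
  unfolding smooth_on_def by (drule spec[of _ "[]"]) simp

lemma smooth_on_transform_open:
  "open U \<Longrightarrow> (\<And>y. y \<in> U \<Longrightarrow> f y = h y) \<Longrightarrow> smooth_on U f \<Longrightarrow> smooth_on U h"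
  unfolding smooth_on_iff_smooth_upto using smooth_upto_transform_open by blast

section \<open>Symmetry of second partial derivatives\<close>

lemma pd_translate:
  assumes "f differentiable (at (y + c))"
  shows "pd i (\<lambda>z. f (z + c)) y = pd i f (y + c)"
proof -
  have "((\<lambda>z. z + c) has_derivative (\<lambda>v. v)) (at y)" by (auto intro!: derivative_eq_intros)
  from has_derivative_compose[OF this has_derivative_frechet_derivative[OF assms]]
  show ?thesis by (rule pd_eqI[THEN trans]) (simp add: pd_def)
qed

lemma mvt_along_axis:
  fixes f :: "real^'n::finite \<Rightarrow> real"
  assumes h: "0 < h" and d: "\<And>t. 0 \<le> t \<Longrightarrow> t \<le> h \<Longrightarrow> f differentiable (at (y + t *\<^sub>R axis i 1))"
  shows "\<exists>\<xi>. 0 < \<xi> \<and> \<xi> < h \<and> f (y + h *\<^sub>R axis i 1) - f y = h * pd i f (y + \<xi> *\<^sub>R axis i 1)"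
proof -
  have "((\<lambda>t. f (y + t *\<^sub>R axis i 1)) has_derivative (\<lambda>r. r * pd i f (y + t *\<^sub>R axis i 1))) (at t within {0..h})"
    if "0 \<le> t" "t \<le> h" for t
  proof -
    let ?p = "y + t *\<^sub>R axis i 1"
    have F: "(f has_derivative frechet_derivative f (at ?p)) (at ?p)"
      using d[OF that] by (rule has_derivative_frechet_derivative)
    have "((\<lambda>t. y + t *\<^sub>R axis i (1::real)) has_derivative (\<lambda>r. r *\<^sub>R axis i 1)) (at t within {0..h})"
      by (auto intro!: derivative_eq_intros)
    from has_derivative_compose[OF this F] show ?thesis
      using linear.scaleR[OF has_derivative_linear[OF F]] by (simp add: pd_def)
  qed
  from mvt_simple[OF h this] show ?thesis by auto
qed

lemma second_difference_mvt:
  fixes f :: "real^'n::finite \<Rightarrow> real"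
  assumes f: "smooth_on U f" and h: "0 < h"
    and box: "\<And>s t. 0 \<le> s \<Longrightarrow> s \<le> h \<Longrightarrow> 0 \<le> t \<Longrightarrow> t \<le> h \<Longrightarrow> x + s *\<^sub>R axis i 1 + t *\<^sub>R axis j 1 \<in> U"
  shows "\<exists>\<xi> \<eta>. 0 \<le> \<xi> \<and> \<xi> \<le> h \<and> 0 \<le> \<eta> \<and> \<eta> \<le> h \<and>
     f (x + h *\<^sub>R axis i 1 + h *\<^sub>R axis j 1) - f (x + h *\<^sub>R axis i 1) - f (x + h *\<^sub>R axis j 1) + f x
       = h * h * pd j (pd i f) (x + \<xi> *\<^sub>R axis i 1 + \<eta> *\<^sub>R axis j 1)"
proof -
  let ?ei = "axis i (1::real)" and ?ej = "axis j (1::real)"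
  define \<psi> where "\<psi> y = f (y + h *\<^sub>R ?ej) - f y" for y
  have df: "f differentiable (at (x + s *\<^sub>R ?ei + t *\<^sub>R ?ej))" if "0 \<le> s" "s \<le> h" "0 \<le> t" "t \<le> h" for s t
    using smooth_on_imp_differentiable[OF f box[OF that]] .
  have df_shift: "(\<lambda>y. f (y + h *\<^sub>R ?ej)) differentiable (at (x + s *\<^sub>R ?ei))" if "0 \<le> s" "s \<le> h" for s
    using df[of s h] that h
    by (intro differentiable_compose[where f = f and g = "\<lambda>y. y + h *\<^sub>R ?ej", unfolded o_def])
      (auto intro!: derivative_intros)
  have df0: "f differentiable (at (x + s *\<^sub>R ?ei))" if "0 \<le> s" "s \<le> h" for s
    using df[of s 0] that h by simp
  have "\<psi> differentiable (at (x + s *\<^sub>R ?ei))" if "0 \<le> s" "s \<le> h" for s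
    unfolding \<psi>_def using df_shift[OF that] df0[OF that] by (rule differentiable_diff)
  then obtain \<xi> where \<xi>: "0 < \<xi>" "\<xi> < h"
    and E1: "\<psi> (x + h *\<^sub>R ?ei) - \<psi> x = h * pd i \<psi> (x + \<xi> *\<^sub>R ?ei)"
    using mvt_along_axis[OF h] by blast
  have pd_\<psi>: "pd i \<psi> (x + \<xi> *\<^sub>R ?ei) = pd i f (x + \<xi> *\<^sub>R ?ei + h *\<^sub>R ?ej) - pd i f (x + \<xi> *\<^sub>R ?ei)"
    unfolding \<psi>_def using \<xi> df[of \<xi> h]
    by (simp add: pd_diff[OF df_shift df0] pd_translate less_imp_le)
  have "pd i f differentiable (at (x + \<xi> *\<^sub>R ?ei + t *\<^sub>R ?ej))" if "0 \<le> t" "t \<le> h" for t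
    using smooth_on_imp_differentiable[OF smooth_on_pd[OF f] box] that \<xi> by simp
  then obtain \<eta> where \<eta>: "0 < \<eta>" "\<eta> < h" and E2:
      "pd i f (x + \<xi> *\<^sub>R ?ei + h *\<^sub>R ?ej) - pd i f (x + \<xi> *\<^sub>R ?ei)
         = h * pd j (pd i f) (x + \<xi> *\<^sub>R ?ei + \<eta> *\<^sub>R ?ej)"
    using mvt_along_axis[OF h, of "pd i f" "x + \<xi> *\<^sub>R ?ei" j] by (auto simp: add.assoc)
  show ?thesis
    using E1 pd_\<psi> E2 \<xi> \<eta> unfolding \<psi>_def by (intro exI[of _ \<xi>] exI[of _ \<eta>]) auto
qed

text \<open>Both mixed partial derivatives equal the second difference of \<open>f\<close> over a small square
  divided by its area, evaluated at possibly different points of the square.\<close>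

lemma mixed_partials_meet_in_ball:
  fixes f :: "real^'n::finite \<Rightarrow> real"
  assumes f: "smooth_on U f" and d: "0 < d" "ball x d \<subseteq> U"
  shows "\<exists>y z. dist y x < d \<and> dist z x < d \<and> pd j (pd i f) y = pd i (pd j f) z"
proof -
  let ?ei = "axis i (1::real)" and ?ej = "axis j (1::real)"
  define h where "h = d / 4"
  have h: "h > 0" using d unfolding h_def by simp
  have near: "dist (x + s *\<^sub>R ?ei + t *\<^sub>R ?ej) x < d"
    if "0 \<le> s" "s \<le> h" "0 \<le> t" "t \<le> h" for s t
  proof -
    have "norm (s *\<^sub>R ?ei + t *\<^sub>R ?ej) \<le> s + t"
      using norm_triangle_ineq[of "s *\<^sub>R ?ei" "t *\<^sub>R ?ej"] that by simp
    moreover have "s + t < d" using that d(1) unfolding h_def by simp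
    ultimately show ?thesis by (simp add: dist_norm)
  qed
  have near': "dist (x + s *\<^sub>R ?ej + t *\<^sub>R ?ei) x < d"
    if "0 \<le> s" "s \<le> h" "0 \<le> t" "t \<le> h" for s t
    using near[OF that(3,4,1,2)] by (simp add: algebra_simps)
  have box: "x + s *\<^sub>R ?ei + t *\<^sub>R ?ej \<in> U" "x + s *\<^sub>R ?ej + t *\<^sub>R ?ei \<in> U"
    if "0 \<le> s" "s \<le> h" "0 \<le> t" "t \<le> h" for s t
    using near[OF that] near'[OF that] d(2) by (auto simp: dist_commute subset_iff)
  obtain \<xi> \<eta> where X: "0 \<le> \<xi>" "\<xi> \<le> h" "0 \<le> \<eta>" "\<eta> \<le> h" and E1:
    "f (x + h *\<^sub>R ?ei + h *\<^sub>R ?ej) - f (x + h *\<^sub>R ?ei) - f (x + h *\<^sub>R ?ej) + f x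
       = h * h * pd j (pd i f) (x + \<xi> *\<^sub>R ?ei + \<eta> *\<^sub>R ?ej)"
    using second_difference_mvt[OF f h box(1)] by blast
  obtain \<xi>' \<eta>' where X': "0 \<le> \<xi>'" "\<xi>' \<le> h" "0 \<le> \<eta>'" "\<eta>' \<le> h" and E2:
    "f (x + h *\<^sub>R ?ej + h *\<^sub>R ?ei) - f (x + h *\<^sub>R ?ej) - f (x + h *\<^sub>R ?ei) + f x
       = h * h * pd i (pd j f) (x + \<xi>' *\<^sub>R ?ej + \<eta>' *\<^sub>R ?ei)"
    using second_difference_mvt[OF f h box(2)] by blast
  have swap: "x + h *\<^sub>R ?ej + h *\<^sub>R ?ei = x + h *\<^sub>R ?ei + h *\<^sub>R ?ej" by (simp add: algebra_simps)
  have "h * h * pd j (pd i f) (x + \<xi> *\<^sub>R ?ei + \<eta> *\<^sub>R ?ej)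
      = h * h * pd i (pd j f) (x + \<xi>' *\<^sub>R ?ej + \<eta>' *\<^sub>R ?ei)"
    using E1 E2 unfolding swap by linarith
  then have "pd j (pd i f) (x + \<xi> *\<^sub>R ?ei + \<eta> *\<^sub>R ?ej) = pd i (pd j f) (x + \<xi>' *\<^sub>R ?ej + \<eta>' *\<^sub>R ?ei)"
    using h by simp
  then show ?thesis using near[OF X] near'[OF X'] by blast
qed

lemma pd_commute:
  fixes f :: "real^'n::finite \<Rightarrow> real"
  assumes U: "open U" and f: "smooth_on U f" and x: "x \<in> U"
  shows "pd i (pd j f) x = pd j (pd i f) x"
proof -
  define A B where "A = pd j (pd i f) x" and "B = pd i (pd j f) x"
  have "\<bar>A - B\<bar> < 2 * e" if e: "0 < e" for e
  proof -
    have "isCont (pd j (pd i f)) x" "isCont (pd i (pd j f)) x"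
      using smooth_on_imp_differentiable[OF smooth_on_pd[OF smooth_on_pd[OF f]] x]
      by (auto intro: differentiable_imp_continuous_within)
    then obtain d1 d2 where "d1 > 0" "d2 > 0"
      and cA: "\<And>y. dist y x < d1 \<Longrightarrow> dist (pd j (pd i f) y) A < e"
      and cB: "\<And>y. dist y x < d2 \<Longrightarrow> dist (pd i (pd j f) y) B < e"
      using e unfolding continuous_at_eps_delta A_def B_def by (metis dist_commute)
    obtain d3 where "d3 > 0" "ball x d3 \<subseteq> U" using U x open_contains_ball by blast
    define d where "d = min d1 (min d2 d3)"
    have "ball x d \<subseteq> ball x d3" unfolding d_def by (rule subset_ball) simp
    then have "0 < d" "ball x d \<subseteq> U"
      using \<open>d1 > 0\<close> \<open>d2 > 0\<close> \<open>d3 > 0\<close> \<open>ball x d3 \<subseteq> U\<close> unfolding d_def by auto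
    then obtain y z where "dist y x < d" "dist z x < d" "pd j (pd i f) y = pd i (pd j f) z"
      using mixed_partials_meet_in_ball[OF f] by blast
    then show ?thesis using cA[of y] cB[of z] unfolding d_def dist_real_def by auto
  qed
  from this[of "\<bar>A - B\<bar> / 3"] have "A = B" by fastforce
  then show ?thesis unfolding A_def B_def ..
qed

section \<open>The metric and its inverse\<close>

definition metric_matrix :: "(real^'n::finite \<Rightarrow> 'n \<Rightarrow> 'n \<Rightarrow> real) \<Rightarrow> real^'n \<Rightarrow> real^'n^'n" where
  "metric_matrix g x = (\<chi> i j. g x i j)"

lemma ginv_metric_matrix: "ginv g x a b = matrix_inv (metric_matrix g x) $ a $ b"
  by (simp add: ginv_def metric_matrix_def)

lemma riem_metric_open: "riem_metric U g \<Longrightarrow> open U"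
  unfolding riem_metric_def by blast

lemma riem_metric_smooth: "riem_metric U g \<Longrightarrow> smooth_on U (\<lambda>x. g x i j)"
  unfolding riem_metric_def by blast

lemma riem_metric_sym: "riem_metric U g \<Longrightarrow> x \<in> U \<Longrightarrow> g x i j = g x j i"
  unfolding riem_metric_def by blast

lemma invertible_metric_matrix:
  assumes metric: "riem_metric U g" and x: "x \<in> U"
  shows "invertible (metric_matrix g x)"
proof -
  have "v = 0" if "metric_matrix g x *v v = 0" for v
  proof (rule ccontr)
    assume "v \<noteq> 0"
    then have "(\<Sum>i\<in>UNIV. \<Sum>j\<in>UNIV. v$i * v$j * g x i j) > 0"
      using metric x unfolding riem_metric_def by blast
    moreover have "(\<Sum>i\<in>UNIV. \<Sum>j\<in>UNIV. v$i * v$j * g x i j) = (\<Sum>i\<in>UNIV. v$i * (metric_matrix g x *v v)$i)"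
      by (simp add: metric_matrix_def matrix_vector_mult_def sum_distrib_left mult.commute mult.left_commute)
    ultimately show False using that by simp
  qed
  then obtain B where "B ** metric_matrix g x = mat 1" using matrix_left_invertible_ker by blast
  then show ?thesis unfolding invertible_def using matrix_left_right_inverse by blast
qed

lemma metric_matrix_inverse:
  assumes "riem_metric U g" "x \<in> U"
  shows "metric_matrix g x ** matrix_inv (metric_matrix g x) = mat 1"
    and "matrix_inv (metric_matrix g x) ** metric_matrix g x = mat 1"
proof -
  have "\<exists>A'. metric_matrix g x ** A' = mat 1 \<and> A' ** metric_matrix g x = mat 1"
    using invertible_metric_matrix[OF assms] unfolding invertible_def by blast
  then have "metric_matrix g x ** matrix_inv (metric_matrix g x) = mat 1 \<and>
             matrix_inv (metric_matrix g x) ** metric_matrix g x = mat 1"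
    unfolding matrix_inv_def by (rule someI_ex)
  then show "metric_matrix g x ** matrix_inv (metric_matrix g x) = mat 1"
    and "matrix_inv (metric_matrix g x) ** metric_matrix g x = mat 1" by auto
qed

lemma metric_ginv:
  assumes "riem_metric U g" "x \<in> U"
  shows "(\<Sum>b\<in>UNIV. g x a b * ginv g x b c) = (if a = c then 1 else 0)"
  using arg_cong[OF metric_matrix_inverse(1)[OF assms], of "\<lambda>M. M $ a $ c"]
  by (simp add: matrix_matrix_mult_def ginv_metric_matrix mat_def metric_matrix_def)

lemma ginv_metric:
  assumes "riem_metric U g" "x \<in> U"
  shows "(\<Sum>b\<in>UNIV. ginv g x a b * g x b c) = (if a = c then 1 else 0)"
  using arg_cong[OF metric_matrix_inverse(2)[OF assms], of "\<lambda>M. M $ a $ c"]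
  by (simp add: matrix_matrix_mult_def ginv_metric_matrix mat_def metric_matrix_def)

lemma ginv_sym:
  assumes metric: "riem_metric U g" and x: "x \<in> U"
  shows "ginv g x a b = ginv g x b a"
proof -
  let ?G = "metric_matrix g x" and ?I = "matrix_inv (metric_matrix g x)"
  have G: "transpose ?G = ?G"
    using riem_metric_sym[OF metric x] by (simp add: transpose_def metric_matrix_def vec_eq_iff)
  have "transpose ?I ** ?G = mat 1"
    using metric_matrix_inverse(1)[OF metric x] by (metis G matrix_transpose_mul transpose_mat)
  then have "transpose ?I = transpose ?I ** (?G ** ?I)"
    using metric_matrix_inverse(1)[OF metric x] by (simp add: matrix_mul_rid)
  also have "\<dots> = ?I"
    using \<open>transpose ?I ** ?G = mat 1\<close> by (simp add: matrix_mul_assoc matrix_mul_lid)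
  finally have "transpose ?I $ a $ b = ?I $ a $ b" by simp
  then show ?thesis by (simp add: ginv_metric_matrix transpose_def)
qed

lemma smooth_on_det:
  assumes U: "open U" and M: "\<And>i j. smooth_on U (\<lambda>x. M x $ i $ j)"
  shows "smooth_on U (\<lambda>x. det (M x :: real^'n::finite^'n))"
  unfolding det_def
  by (intro smooth_on_sum[OF U] smooth_on_mult[OF U] smooth_on_const smooth_on_prod[OF U] M)

lemma ginv_cramer:
  assumes metric: "riem_metric U g" and x: "x \<in> U"
  shows "ginv g x a b =
    det (\<chi> i j. if j = a then axis b 1 $ i else metric_matrix g x $ i $ j) / det (metric_matrix g x)"
proof -
  have "det (metric_matrix g x) \<noteq> 0"
    using invertible_metric_matrix[OF metric x] invertible_det_nz by blast
  moreover have "metric_matrix g x *v (matrix_inv (metric_matrix g x) *v axis b 1) = axis b 1"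
    using metric_matrix_inverse(1)[OF metric x] by (simp add: matrix_vector_mul_assoc)
  ultimately have "(matrix_inv (metric_matrix g x) *v axis b 1) $ a =
      det (\<chi> i j. if j = a then axis b 1 $ i else metric_matrix g x $ i $ j) / det (metric_matrix g x)"
    using cramer by fastforce
  moreover have "(matrix_inv (metric_matrix g x) *v axis b 1) $ a = ginv g x a b"
    by (simp add: matrix_vector_mult_def ginv_metric_matrix axis_def if_distrib cong: if_cong)
  ultimately show ?thesis by simp
qed

lemma smooth_on_ginv:
  assumes metric: "riem_metric U g"
  shows "smooth_on U (\<lambda>x. ginv g x a b)"
proof -
  have U: "open U" by (rule riem_metric_open[OF metric])
  have "smooth_on U (\<lambda>x. det (\<chi> i j. if j = a then axis b 1 $ i else metric_matrix g x $ i $ j)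
                          * inverse (det (metric_matrix g x)))"
  proof (intro smooth_on_mult[OF U] smooth_on_inverse[OF U] smooth_on_det[OF U])
    show "smooth_on U (\<lambda>x. (\<chi> i j. if j = a then axis b 1 $ i else metric_matrix g x $ i $ j) $ i $ j)"
      for i j by (cases "j = a") (simp_all add: metric_matrix_def smooth_on_const riem_metric_smooth[OF metric])
    show "smooth_on U (\<lambda>x. metric_matrix g x $ i $ j)" for i j
      by (simp add: metric_matrix_def riem_metric_smooth[OF metric])
    show "\<forall>x\<in>U. det (metric_matrix g x) \<noteq> 0"
      using invertible_metric_matrix[OF metric] invertible_det_nz by blast
  qed
  then show ?thesis
    by (rule smooth_on_transform_open[OF U, rotated]) (simp add: ginv_cramer[OF metric] divide_inverse)
qed

lemma differentiable_metric: "riem_metric U g \<Longrightarrow> x \<in> U \<Longrightarrow> (\<lambda>y. g y i j) differentiable (at x)"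
  by (rule smooth_on_imp_differentiable[OF riem_metric_smooth])

lemma differentiable_ginv: "riem_metric U g \<Longrightarrow> x \<in> U \<Longrightarrow> (\<lambda>y. ginv g y i j) differentiable (at x)"
  by (rule smooth_on_imp_differentiable[OF smooth_on_ginv])

lemma pd_metric_sym:
  assumes metric: "riem_metric U g" and x: "x \<in> U"
  shows "pd i (\<lambda>y. g y a b) x = pd i (\<lambda>y. g y b a) x"
  by (rule pd_transform_open[OF riem_metric_open[OF metric] x]) (rule riem_metric_sym[OF metric])

text \<open>Differentiate \<open>g\<^sub>e\<^sub>c g\<^sup>c\<^sup>b = \<delta>\<^sub>e\<^sup>b\<close>.\<close>

lemma pd_ginv:
  assumes metric: "riem_metric U g" and x: "x \<in> U"
  shows "pd i (\<lambda>y. ginv g y a b) x =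
     - (\<Sum>c\<in>UNIV. \<Sum>d\<in>UNIV. ginv g x a c * pd i (\<lambda>y. g y c d) x * ginv g x d b)"
proof -
  define P where "P c = pd i (\<lambda>y. ginv g y c b) x" for c
  have key: "(\<Sum>c\<in>UNIV. g x e c * P c) = - (\<Sum>c\<in>UNIV. pd i (\<lambda>y. g y e c) x * ginv g x c b)" for e
  proof -
    have "pd i (\<lambda>y. \<Sum>c\<in>UNIV. g y e c * ginv g y c b) x = pd i (\<lambda>y. if e = b then 1 else 0) x"
      by (rule pd_transform_open[OF riem_metric_open[OF metric] x]) (rule metric_ginv[OF metric])
    moreover have "pd i (\<lambda>y. \<Sum>c\<in>UNIV. g y e c * ginv g y c b) x =
        (\<Sum>c\<in>UNIV. pd i (\<lambda>y. g y e c) x * ginv g x c b + g x e c * P c)"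
      unfolding P_def
      by (subst pd_sum) (auto intro!: sum.cong pd_mult differentiable_mult
          differentiable_metric[OF metric x] differentiable_ginv[OF metric x])
    ultimately show ?thesis by (simp add: pd_const sum.distrib eq_neg_iff_add_eq_0 add.commute)
  qed
  have "P a = (\<Sum>c\<in>UNIV. (if a = c then P c else 0))" by (simp add: sum.delta)
  also have "\<dots> = (\<Sum>c\<in>UNIV. (if a = c then 1 else 0) * P c)" by (rule sum.cong) auto
  also have "\<dots> = (\<Sum>c\<in>UNIV. (\<Sum>e\<in>UNIV. ginv g x a e * g x e c) * P c)"
    by (simp add: ginv_metric[OF metric x])
  also have "\<dots> = (\<Sum>e\<in>UNIV. ginv g x a e * (\<Sum>c\<in>UNIV. g x e c * P c))"
    by (simp add: sum_distrib_left sum_distrib_right mult.assoc) (rule sum.swap)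
  also have "\<dots> = - (\<Sum>c\<in>UNIV. \<Sum>d\<in>UNIV. ginv g x a c * pd i (\<lambda>y. g y c d) x * ginv g x d b)"
    by (simp add: key sum_distrib_left sum_negf mult.assoc)
  finally show ?thesis unfolding P_def .
qed

lemma smooth_on_christoffel:
  assumes metric: "riem_metric U g"
  shows "smooth_on U (\<lambda>x. christoffel g x c a b)"
proof -
  have U: "open U" by (rule riem_metric_open[OF metric])
  show ?thesis unfolding christoffel_def
    by (intro smooth_on_mult[OF U] smooth_on_const smooth_on_sum[OF U] smooth_on_diff[OF U]
        smooth_on_add[OF U] smooth_on_ginv[OF metric] smooth_on_pd riem_metric_smooth[OF metric])
qed

lemma christoffel_sym:
  assumes metric: "riem_metric U g" and x: "x \<in> U"
  shows "christoffel g x c a b = christoffel g x c b a"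
  unfolding christoffel_def using pd_metric_sym[OF metric x] by (simp add: add.commute)

lemma nabla_ginv_eq_0:
  assumes metric: "riem_metric U g" and x: "x \<in> U"
  shows "pd a (\<lambda>y. ginv g y c d) x + (\<Sum>e\<in>UNIV. christoffel g x c a e * ginv g x e d)
           + (\<Sum>e\<in>UNIV. christoffel g x d a e * ginv g x c e) = 0"
proof -
  define P where "P e f = pd a (\<lambda>y. g y e f) x" for e f
  define R where "R e f = pd e (\<lambda>y. g y a f) x" for e f
  define gi where "gi e f = ginv g x e f" for e f
  have Psym: "P e f = P f e" for e f unfolding P_def by (rule pd_metric_sym[OF metric x])
  have gsym: "gi e f = gi f e" for e f unfolding gi_def by (rule ginv_sym[OF metric x])
  have R1: "pd f (\<lambda>y. g y a e) x = R f e" for e f unfolding R_def ..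
  have R2: "pd f (\<lambda>y. g y e a) x = R f e" for e f unfolding R_def by (rule pd_metric_sym[OF metric x])
  have S1: "(\<Sum>e\<in>UNIV. christoffel g x c a e * ginv g x e d) =
      (\<Sum>e\<in>UNIV. \<Sum>f\<in>UNIV. (1/2) * (gi c f * (P e f + R e f - R f e)) * gi e d)"
    unfolding christoffel_def gi_def P_def
    by (simp add: sum_distrib_right sum_distrib_left R1 R2 mult.assoc)
  have "(\<Sum>e\<in>UNIV. christoffel g x d a e * ginv g x c e) =
      (\<Sum>e\<in>UNIV. \<Sum>f\<in>UNIV. (1/2) * (gi d f * (P e f + R e f - R f e)) * gi c e)"
    unfolding christoffel_def gi_def P_def
    by (simp add: sum_distrib_right sum_distrib_left R1 R2 mult.assoc)
  also have "\<dots> = (\<Sum>e\<in>UNIV. \<Sum>f\<in>UNIV. (1/2) * (gi e d * (P e f + R f e - R e f)) * gi c f)"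
    by (subst sum.swap) (intro sum.cong refl, simp add: gsym[of d] Psym)
  finally have S2: "(\<Sum>e\<in>UNIV. christoffel g x d a e * ginv g x c e) = \<dots>" .
  have "pd a (\<lambda>y. ginv g y c d) x = - (\<Sum>f\<in>UNIV. \<Sum>e\<in>UNIV. gi c f * P f e * gi e d)"
    unfolding pd_ginv[OF metric x] gi_def P_def ..
  also have "\<dots> = - (\<Sum>e\<in>UNIV. \<Sum>f\<in>UNIV. gi c f * P e f * gi e d)"
    by (subst sum.swap) (simp add: Psym)
  finally have D: "pd a (\<lambda>y. ginv g y c d) x = \<dots>" .
  have "(\<Sum>e\<in>UNIV. christoffel g x c a e * ginv g x e d) + (\<Sum>e\<in>UNIV. christoffel g x d a e * ginv g x c e)
      = (\<Sum>e\<in>UNIV. \<Sum>f\<in>UNIV. gi c f * P e f * gi e d)"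
    unfolding S1 S2 sum.distrib[symmetric] by (intro sum.cong refl) (simp add: algebra_simps)
  then show ?thesis using D by simp
qed

lemma sum_nabla_ginv_eq_0:
  assumes metric: "riem_metric U g" and x: "x \<in> U"
  shows "(\<Sum>e\<in>UNIV. pd a (\<lambda>y. ginv g y c e) x * Y e)
     + (\<Sum>e\<in>UNIV. christoffel g x c a e * (\<Sum>d\<in>UNIV. ginv g x e d * Y d))
     + (\<Sum>e\<in>UNIV. ginv g x c e * (\<Sum>d\<in>UNIV. christoffel g x d a e * Y d)) = 0"
proof -
  have "(\<Sum>d\<in>UNIV. Y d * (pd a (\<lambda>y. ginv g y c d) x + (\<Sum>e\<in>UNIV. christoffel g x c a e * ginv g x e d)
           + (\<Sum>e\<in>UNIV. christoffel g x d a e * ginv g x c e))) = 0"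
    by (simp add: nabla_ginv_eq_0[OF metric x])
  moreover have "(\<Sum>d\<in>UNIV. Y d * (\<Sum>e\<in>UNIV. christoffel g x c a e * ginv g x e d))
      = (\<Sum>e\<in>UNIV. christoffel g x c a e * (\<Sum>d\<in>UNIV. ginv g x e d * Y d))"
    by (simp add: sum_distrib_left mult_ac) (rule sum.swap)
  moreover have "(\<Sum>d\<in>UNIV. Y d * (\<Sum>e\<in>UNIV. christoffel g x d a e * ginv g x c e))
      = (\<Sum>e\<in>UNIV. ginv g x c e * (\<Sum>d\<in>UNIV. christoffel g x d a e * Y d))"
    by (simp add: sum_distrib_left mult_ac) (rule sum.swap)
  ultimately show ?thesis by (simp add: distrib_left sum.distrib mult.commute)
qed

definition lists_of_length :: "nat \<Rightarrow> 'a list set" where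
  "lists_of_length k = {xs. length xs = k}"

lemma finite_lists_of_length [simp]: "finite (lists_of_length k :: 'a::finite list set)"
  using finite_lists_length_eq[of "UNIV :: 'a set" k] by (simp add: lists_of_length_def)

lemma lists_of_length_0 [simp]: "lists_of_length 0 = {[]}"
  by (auto simp: lists_of_length_def)

lemma sum_lists_of_length_Suc:
  "(\<Sum>l\<in>lists_of_length (Suc k). F l) = (\<Sum>y\<in>(UNIV::'a::finite set). \<Sum>l\<in>lists_of_length k. F (y # l))"
proof -
  have e: "lists_of_length (Suc k) = (\<lambda>(y, l). y # l) ` (UNIV \<times> lists_of_length k)"
    by (auto simp: lists_of_length_def image_iff length_Suc_conv)
  have i: "inj_on (\<lambda>(y::'a, l). y # l) (UNIV \<times> lists_of_length k)"
    by (auto simp: inj_on_def)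
  show ?thesis unfolding e sum.reindex[OF i] sum.cartesian_product by (simp add: case_prod_beta)
qed

lemma sum_lists_of_length_snoc:
  "(\<Sum>l\<in>lists_of_length (Suc k). F l) = (\<Sum>l\<in>lists_of_length k. \<Sum>y\<in>(UNIV::'a::finite set). F (l @ [y]))"
proof -
  have e: "lists_of_length (Suc k) = (\<lambda>(l, y). l @ [y]) ` (lists_of_length k \<times> (UNIV::'a set))"
    by (auto simp: lists_of_length_def image_iff length_Suc_conv_rev)
  have i: "inj_on (\<lambda>(l, y::'a). l @ [y]) (lists_of_length k \<times> UNIV)"
    by (auto simp: inj_on_def)
  show ?thesis unfolding e sum.reindex[OF i] sum.cartesian_product by (simp add: case_prod_beta)
qed

lemma sum_lists_of_length_add:
  "(\<Sum>l\<in>lists_of_length (r + t). F l)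
     = (\<Sum>l1\<in>lists_of_length r. \<Sum>l2\<in>lists_of_length t. F (l1 @ l2 :: 'a::finite list))"
proof (induction r arbitrary: F)
  case (Suc r)
  then show ?case by (simp add: sum_lists_of_length_Suc)
qed simp

fun mask_sel :: "bool \<Rightarrow> bool list \<Rightarrow> 'a list \<Rightarrow> 'a list" where
  "mask_sel b (c # cs) (x # xs) = (if c = b then x # mask_sel b cs xs else mask_sel b cs xs)"
| "mask_sel b _ _ = []"

lemma mask_sel_snoc:
  "length cs = length l \<Longrightarrow>
     mask_sel b (cs @ [c]) (l @ [y]) = (if c = b then mask_sel b cs l @ [y] else mask_sel b cs l)"
  by (induction cs l rule: list_induct2) auto

lemma count_list_replicate: "count_list (replicate q c) b = (if b = c then q else 0)"
  by (induction q) auto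

lemma count_list_True_False: "count_list cs True + count_list cs False = length cs"
  by (induction cs) auto

lemma count_list_eq_0_iff_replicate:
  "length cs = q \<Longrightarrow> count_list cs b = 0 \<longleftrightarrow> cs = replicate q (\<not> b)"
  by (induction cs arbitrary: q) auto

lemma prod_list_map_mask_sel:
  fixes W :: "'a \<Rightarrow> 'b::comm_monoid_mult"
  shows "length cs = length l \<Longrightarrow>
    prod_list (map W l) = prod_list (map W (mask_sel True cs l)) * prod_list (map W (mask_sel False cs l))"
  by (induction cs l rule: list_induct2) (auto simp: ac_simps)

lemma sum_lists_mask_sel_mult:
  fixes f h :: "'a::finite list \<Rightarrow> real"
  assumes "length cs = k"
  shows "(\<Sum>l\<in>lists_of_length k. f (mask_sel True cs l) * h (mask_sel False cs l)) =
         (\<Sum>l\<in>lists_of_length (count_list cs True). f l) * (\<Sum>l\<in>lists_of_length (count_list cs False). h l)"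
  using assms
proof (induction cs arbitrary: k f h)
  case (Cons c cs)
  then obtain k' where k: "k = Suc k'" "length cs = k'" by auto
  show ?case
  proof (cases c)
    case True
    then show ?thesis using Cons.IH[OF k(2), of "\<lambda>l. f (_ # l)" h]
      by (simp add: k(1) sum_lists_of_length_Suc sum_distrib_right)
  next
    case False
    then show ?thesis using Cons.IH[OF k(2), of f "\<lambda>l. h (_ # l)"]
      by (simp add: k(1) sum_lists_of_length_Suc sum_distrib_left)
  qed
qed simp

lemma sum_lists_weighted_mask_sel:
  fixes W :: "'a::finite \<Rightarrow> real"
  assumes "length cs = k"
  shows "(\<Sum>l\<in>lists_of_length k. prod_list (map W l) *
            (\<Sum>c\<in>C. Fa c (mask_sel True cs l) * Fb c (mask_sel False cs l)))
       = (\<Sum>c\<in>C. (\<Sum>l\<in>lists_of_length (count_list cs True). prod_list (map W l) * Fa c l)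
                 * (\<Sum>l\<in>lists_of_length (count_list cs False). prod_list (map W l) * Fb c l))"
proof -
  have "(\<Sum>l\<in>lists_of_length k. prod_list (map W l) *
            (\<Sum>c\<in>C. Fa c (mask_sel True cs l) * Fb c (mask_sel False cs l)))
      = (\<Sum>l\<in>lists_of_length k. \<Sum>c\<in>C.
           (prod_list (map W (mask_sel True cs l)) * Fa c (mask_sel True cs l)) *
           (prod_list (map W (mask_sel False cs l)) * Fb c (mask_sel False cs l)))"
    using assms by (intro sum.cong refl)
      (simp add: prod_list_map_mask_sel[of cs _ W] lists_of_length_def sum_distrib_left ac_simps)
  also have "\<dots> = (\<Sum>c\<in>C. \<Sum>l\<in>lists_of_length k.
           (prod_list (map W (mask_sel True cs l)) * Fa c (mask_sel True cs l)) *
           (prod_list (map W (mask_sel False cs l)) * Fb c (mask_sel False cs l)))"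
    by (rule sum.swap)
  also have "\<dots> = (\<Sum>c\<in>C. (\<Sum>l\<in>lists_of_length (count_list cs True). prod_list (map W l) * Fa c l)
                 * (\<Sum>l\<in>lists_of_length (count_list cs False). prod_list (map W l) * Fb c l))"
    by (intro sum.cong refl sum_lists_mask_sel_mult[OF assms])
  finally show ?thesis .
qed

section \<open>Symmetrization and polarization\<close>

lemma symmetrize_permute_list:
  "symmetrize F xs = (1 / fact (length xs)) * (\<Sum>\<sigma> | \<sigma> permutes {..<length xs}. F (permute_list \<sigma> xs))"
  unfolding symmetrize_def permute_list_def ..

lemma symmetrize_cong:
  "(\<And>\<beta>s. length \<beta>s = length \<alpha>s \<Longrightarrow> F \<beta>s = G \<beta>s) \<Longrightarrow> symmetrize F \<alpha>s = symmetrize G \<alpha>s"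
  unfolding symmetrize_permute_list by (intro arg_cong[where f = "\<lambda>z. _ * z"] sum.cong) auto

lemma prod_list_map_permute_list:
  fixes v :: "'a \<Rightarrow> 'b::comm_monoid_mult"
  assumes "\<sigma> permutes {..<length xs}"
  shows "prod_list (map v (permute_list \<sigma> xs)) = prod_list (map v xs)"
proof -
  have "mset (map v (permute_list \<sigma> xs)) = mset (map v xs)"
    using mset_permute_list[OF assms] by simp
  from arg_cong[OF this, of prod_mset] show ?thesis unfolding prod_mset_prod_list .
qed

lemma sum_lists_symmetrize:
  fixes F :: "'a::finite list \<Rightarrow> real"
  shows "(\<Sum>l\<in>lists_of_length q. prod_list (map v l) * symmetrize F l)
       = (\<Sum>l\<in>lists_of_length q. prod_list (map v l) * F l)"
proof -
  let ?P = "{\<sigma>. \<sigma> permutes {..<q}}"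
  have permute: "(\<Sum>l\<in>lists_of_length q. prod_list (map v l) * F (permute_list \<sigma> l))
               = (\<Sum>l\<in>lists_of_length q. prod_list (map v l) * F l)" if \<sigma>: "\<sigma> \<in> ?P" for \<sigma>
  proof (rule sum.reindex_bij_witness[where j = "permute_list \<sigma>" and i = "permute_list (inv \<sigma>)"])
    fix l :: "'a list" assume "l \<in> lists_of_length q"
    then have \<sigma>l: "\<sigma> permutes {..<length l}" "inv \<sigma> permutes {..<length l}"
      using \<sigma> permutes_inv by (auto simp: lists_of_length_def)
    show "permute_list (inv \<sigma>) (permute_list \<sigma> l) = l"
      using permute_list_compose[OF \<sigma>l(2), of \<sigma>] permutes_inv_o(1)[OF \<sigma>l(1)] by simp
    show "permute_list \<sigma> l \<in> lists_of_length q"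
      using \<open>l \<in> lists_of_length q\<close> by (simp add: lists_of_length_def)
    show "prod_list (map v (permute_list \<sigma> l)) * F (permute_list \<sigma> l) = prod_list (map v l) * F (permute_list \<sigma> l)"
      using prod_list_map_permute_list[OF \<sigma>l(1), of v] by simp
    show "permute_list \<sigma> (permute_list (inv \<sigma>) l) = l"
      using permute_list_compose[OF \<sigma>l(1), of "inv \<sigma>"] permutes_inv_o(2)[OF \<sigma>l(1)] by simp
    show "permute_list (inv \<sigma>) l \<in> lists_of_length q"
      using \<open>l \<in> lists_of_length q\<close> by (simp add: lists_of_length_def)
  qed
  have "(\<Sum>l\<in>lists_of_length q. prod_list (map v l) * symmetrize F l)
      = (\<Sum>l\<in>lists_of_length q. \<Sum>\<sigma>\<in>?P. prod_list (map v l) * F (permute_list \<sigma> l)) / fact q"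
    by (simp add: symmetrize_permute_list lists_of_length_def sum_distrib_left sum_divide_distrib)
  also have "\<dots> = (\<Sum>\<sigma>\<in>?P. \<Sum>l\<in>lists_of_length q. prod_list (map v l) * F (permute_list \<sigma> l)) / fact q"
    by (subst sum.swap) (rule refl)
  also have "\<dots> = (\<Sum>\<sigma>\<in>?P. \<Sum>l\<in>lists_of_length q. prod_list (map v l) * F l) / fact q"
    by (subst sum.cong[OF refl permute], assumption, rule refl)
  also have "\<dots> = (\<Sum>l\<in>lists_of_length q. prod_list (map v l) * F l)"
    using card_permutations[of "{..<q}" q] by simp
  finally show ?thesis .
qed

lemma sum_PiE_eq_sum_Pow_image:
  assumes "finite A" "finite S"
  shows "(\<Sum>\<sigma>\<in>A \<rightarrow>\<^sub>E S. G \<sigma>) = (\<Sum>T\<in>Pow S. \<Sum>\<sigma> | \<sigma> \<in> A \<rightarrow>\<^sub>E T \<and> \<sigma> ` A = T. G \<sigma>)"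
proof -
  have fin: "finite (A \<rightarrow>\<^sub>E S)" using assms by (simp add: finite_PiE)
  have "(\<Sum>\<sigma> | \<sigma> \<in> A \<rightarrow>\<^sub>E T \<and> \<sigma> ` A = T. G \<sigma>) = (\<Sum>\<sigma>\<in>A \<rightarrow>\<^sub>E S. if \<sigma> ` A = T then G \<sigma> else 0)"
    if "T \<in> Pow S" for T
  proof -
    have "{\<sigma>. \<sigma> \<in> A \<rightarrow>\<^sub>E T \<and> \<sigma> ` A = T} = {\<sigma> \<in> A \<rightarrow>\<^sub>E S. \<sigma> ` A = T}"
      using that by (auto simp: PiE_def Pi_def)
    then show ?thesis by (simp add: sum.inter_filter[OF fin])
  qed
  then have "(\<Sum>T\<in>Pow S. \<Sum>\<sigma> | \<sigma> \<in> A \<rightarrow>\<^sub>E T \<and> \<sigma> ` A = T. G \<sigma>)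
      = (\<Sum>T\<in>Pow S. \<Sum>\<sigma>\<in>A \<rightarrow>\<^sub>E S. if \<sigma> ` A = T then G \<sigma> else 0)"
    by (rule sum.cong[OF refl])
  also have "\<dots> = (\<Sum>\<sigma>\<in>A \<rightarrow>\<^sub>E S. \<Sum>T\<in>Pow S. if \<sigma> ` A = T then G \<sigma> else 0)"
    by (rule sum.swap)
  also have "\<dots> = (\<Sum>\<sigma>\<in>A \<rightarrow>\<^sub>E S. G \<sigma>)"
  proof (rule sum.cong[OF refl])
    fix \<sigma> assume "\<sigma> \<in> A \<rightarrow>\<^sub>E S"
    then have "\<sigma> ` A \<in> Pow S" by (auto simp: PiE_def Pi_def)
    then show "(\<Sum>T\<in>Pow S. if \<sigma> ` A = T then G \<sigma> else 0) = G \<sigma>"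
      using assms(2) by (simp add: sum.delta')
  qed
  finally show ?thesis ..
qed

lemma sum_PiE_onto_eq_sum_permutes:
  assumes A: "finite A" and G: "\<And>\<sigma> \<tau>. (\<And>x. x \<in> A \<Longrightarrow> \<sigma> x = \<tau> x) \<Longrightarrow> G \<sigma> = G \<tau>"
  shows "(\<Sum>\<sigma> | \<sigma> \<in> A \<rightarrow>\<^sub>E A \<and> \<sigma> ` A = A. G \<sigma>) = (\<Sum>\<sigma> | \<sigma> permutes A. G \<sigma>)"
proof (rule sum.reindex_bij_witness[where i = "\<lambda>\<sigma>. restrict \<sigma> A" and j = "\<lambda>\<tau> x. if x \<in> A then \<tau> x else x"])
  fix \<tau> assume \<tau>: "\<tau> \<in> {\<sigma>. \<sigma> \<in> A \<rightarrow>\<^sub>E A \<and> \<sigma> ` A = A}"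
  then show "restrict (\<lambda>x. if x \<in> A then \<tau> x else x) A = \<tau>"
    by (auto simp: restrict_def PiE_def extensional_def fun_eq_iff)
  have im: "(\<lambda>x. if x \<in> A then \<tau> x else x) ` A = A" using \<tau> by (auto simp: image_def)
  then have "inj_on (\<lambda>x. if x \<in> A then \<tau> x else x) A"
    using A by (simp add: eq_card_imp_inj_on)
  then show "(\<lambda>x. if x \<in> A then \<tau> x else x) \<in> {\<sigma>. \<sigma> permutes A}"
    using im by (auto simp: bij_betw_def intro: bij_imp_permutes)
  show "G (\<lambda>x. if x \<in> A then \<tau> x else x) = G \<tau>" by (rule G) simp
next
  fix \<sigma> assume "\<sigma> \<in> {\<sigma>. \<sigma> permutes A}"
  then have p: "\<sigma> permutes A" by simp
  show "(\<lambda>x. if x \<in> A then restrict \<sigma> A x else x) = \<sigma>"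
    using permutes_not_in[OF p] by (auto simp: fun_eq_iff)
  show "restrict \<sigma> A \<in> {\<sigma>. \<sigma> \<in> A \<rightarrow>\<^sub>E A \<and> \<sigma> ` A = A}"
    using permutes_image[OF p] permutes_in_image[OF p] by auto
qed

lemma prod_indicator:
  "finite A \<Longrightarrow> (\<Prod>j\<in>A. if P j then 1 else 0 :: 'a::comm_semiring_1) = (if \<forall>j\<in>A. P j then 1 else 0)"
  by (induction A rule: finite_induct) auto

lemma sum_lists_weighted_by_counts:
  fixes F :: "'a::finite list \<Rightarrow> real"
  assumes S: "finite S"
  shows "(\<Sum>bs\<in>lists_of_length q. prod_list (map (\<lambda>b. \<Sum>i\<in>S. if as ! i = b then 1 else 0) bs) * F bs)
       = (\<Sum>\<sigma>\<in>{..<q} \<rightarrow>\<^sub>E S. F (map (\<lambda>j. as ! \<sigma> j) [0..<q]))"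
proof -
  have count: "prod_list (map (\<lambda>b. \<Sum>i\<in>S. if as ! i = b then 1 else 0) bs) * F bs
      = (\<Sum>\<sigma>\<in>{..<q} \<rightarrow>\<^sub>E S. if bs = map (\<lambda>j. as ! \<sigma> j) [0..<q] then F bs else 0)"
    if "bs \<in> lists_of_length q" for bs
  proof -
    have "prod_list (map (\<lambda>b. \<Sum>i\<in>S. if as ! i = b then 1 else 0) bs)
        = (\<Prod>j<q. \<Sum>i\<in>S. if as ! i = bs ! j then 1 else 0 :: real)"
      using that by (simp add: prod.list_conv_set_nth atLeast0LessThan lists_of_length_def)
    also have "\<dots> = (\<Sum>\<sigma>\<in>{..<q} \<rightarrow>\<^sub>E S. \<Prod>j<q. if as ! \<sigma> j = bs ! j then 1 else 0)"
      using S by (simp add: prod_sum_PiE)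
    also have "\<dots> = (\<Sum>\<sigma>\<in>{..<q} \<rightarrow>\<^sub>E S. if bs = map (\<lambda>j. as ! \<sigma> j) [0..<q] then 1 else 0)"
    proof (rule sum.cong[OF refl])
      fix \<sigma>
      have "(\<forall>j\<in>{..<q}. as ! \<sigma> j = bs ! j) \<longleftrightarrow> bs = map (\<lambda>j. as ! \<sigma> j) [0..<q]"
        using that by (auto simp: lists_of_length_def list_eq_iff_nth_eq)
      then show "(\<Prod>j<q. if as ! \<sigma> j = bs ! j then 1 else 0) = (if bs = map (\<lambda>j. as ! \<sigma> j) [0..<q] then 1 else 0 :: real)"
        by (simp add: prod_indicator)
    qed
    finally show ?thesis by (simp add: sum_distrib_right if_distrib[of "\<lambda>z. z * F bs"] cong: if_cong)
  qed
  have "(\<Sum>bs\<in>lists_of_length q. prod_list (map (\<lambda>b. \<Sum>i\<in>S. if as ! i = b then 1 else 0) bs) * F bs)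
      = (\<Sum>bs\<in>lists_of_length q. \<Sum>\<sigma>\<in>{..<q} \<rightarrow>\<^sub>E S. if bs = map (\<lambda>j. as ! \<sigma> j) [0..<q] then F bs else 0)"
    by (rule sum.cong[OF refl]) (rule count)
  also have "\<dots> = (\<Sum>\<sigma>\<in>{..<q} \<rightarrow>\<^sub>E S. \<Sum>bs\<in>lists_of_length q. if bs = map (\<lambda>j. as ! \<sigma> j) [0..<q] then F bs else 0)"
    by (rule sum.swap)
  also have "\<dots> = (\<Sum>\<sigma>\<in>{..<q} \<rightarrow>\<^sub>E S. F (map (\<lambda>j. as ! \<sigma> j) [0..<q]))"
    by (rule sum.cong[OF refl]) (simp add: sum.delta, simp add: lists_of_length_def)
  finally show ?thesis .
qed

text \<open>Evaluate the form on the vectors counting, for each set \<open>S\<close> of positions, how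
  often each value occurs among the entries of \<open>as\<close> at \<open>S\<close>; Moebius inversion over \<open>S\<close> then
  isolates \<open>fact q \<cdot> symmetrize F as\<close>.\<close>

lemma symmetrize_eq_0_if_diagonal_eq_0:
  fixes F :: "'a::finite list \<Rightarrow> real"
  assumes diag: "\<And>v. (\<Sum>bs\<in>lists_of_length q. prod_list (map v bs) * F bs) = 0"
    and len: "length as = q"
  shows "symmetrize F as = 0"
proof -
  define A where "A = {..<q}"
  define G where "G \<sigma> = F (map (\<lambda>j. as ! \<sigma> j) [0..<q])" for \<sigma> :: "nat \<Rightarrow> nat"
  define onto where "onto T = (\<Sum>\<sigma> | \<sigma> \<in> A \<rightarrow>\<^sub>E T \<and> \<sigma> ` A = T. G \<sigma>)" for T
  define into where "into S = (\<Sum>\<sigma>\<in>A \<rightarrow>\<^sub>E S. G \<sigma>)" for S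
  have finA: "finite A" unfolding A_def by simp
  have "onto A = (\<Sum>T\<in>Pow A. (-1) ^ (card A - card T) * into T)"
    unfolding onto_def into_def
    by (rule inclusion_exclusion_mobius[OF sum_PiE_eq_sum_Pow_image[OF finA] finA])
  also have "\<dots> = 0"
  proof (intro sum.neutral ballI)
    fix T assume "T \<in> Pow A"
    then have "into T = (\<Sum>bs\<in>lists_of_length q. prod_list (map (\<lambda>b. \<Sum>i\<in>T. if as ! i = b then 1 else 0) bs) * F bs)"
      unfolding into_def G_def A_def using finA
      by (subst sum_lists_weighted_by_counts) (auto simp: A_def intro: finite_subset)
    then show "(-1) ^ (card A - card T) * into T = 0" using diag by simp
  qed
  finally have "onto A = 0" .
  moreover have "onto A = (\<Sum>\<sigma> | \<sigma> permutes A. G \<sigma>)"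
    unfolding onto_def
    by (rule sum_PiE_onto_eq_sum_permutes[OF finA]) (unfold G_def A_def, intro arg_cong[where f = F] map_cong, auto)
  then have "onto A = fact q * symmetrize F as"
    by (simp add: G_def A_def symmetrize_permute_list len permute_list_def)
  ultimately show ?thesis by simp
qed

lemma sum_sum_mult_transpose:
  fixes M :: "'a \<Rightarrow> 'a \<Rightarrow> 'b::comm_semiring_1"
  shows "(\<Sum>c\<in>A. (\<Sum>e\<in>A. M c e * P e) * Q c) = (\<Sum>c\<in>A. P c * (\<Sum>e\<in>A. M e c * Q e))"
proof -
  have "(\<Sum>c\<in>A. (\<Sum>e\<in>A. M c e * P e) * Q c) = (\<Sum>c\<in>A. \<Sum>e\<in>A. P e * (M c e * Q c))"
    unfolding sum_distrib_right by (intro sum.cong refl) (simp add: mult_ac)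
  also have "\<dots> = (\<Sum>e\<in>A. \<Sum>c\<in>A. P e * (M c e * Q c))"
    by (rule sum.swap)
  finally show ?thesis by (simp only: sum_distrib_left)
qed

section \<open>Covariant derivatives\<close>

definition lower_correction ::
    "(real^'n::finite \<Rightarrow> 'n \<Rightarrow> 'n \<Rightarrow> real) \<Rightarrow> real^'n \<Rightarrow> 'n \<Rightarrow> ('n list \<Rightarrow> real) \<Rightarrow> 'n list \<Rightarrow> real" where
  "lower_correction g x a \<phi> ls = (\<Sum>j<length ls. \<Sum>c\<in>UNIV. christoffel g x c a (ls ! j) * \<phi> (ls[j := c]))"

lemma nabla_Nil: "nabla g T ups [] x = 0"
  unfolding nabla_def by simp

lemma nabla_Cons: "nabla g T ups (a # ls) x = pd a (T ups ls) x
   + (\<Sum>i<length ups. \<Sum>c\<in>UNIV. christoffel g x (ups ! i) a c * T (ups[i := c]) ls x)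
   - lower_correction g x a (\<lambda>l. T ups l x) ls"
  unfolding nabla_def lower_correction_def by simp

lemma nabla_Cons_scalar:
  "nabla g T [] (a # ls) x = pd a (T [] ls) x - lower_correction g x a (\<lambda>l. T [] l x) ls"
  by (simp add: nabla_Cons)

lemma nabla_Cons_vector: "nabla g T [c] (a # ls) x = pd a (T [c] ls) x
   + (\<Sum>e\<in>UNIV. christoffel g x c a e * T [e] ls x) - lower_correction g x a (\<lambda>l. T [c] l x) ls"
  by (simp add: nabla_Cons)

lemma nablas_0 [simp]: "nablas g 0 T = T"
  unfolding nablas_def by simp

lemma nablas_Suc: "nablas g (Suc k) T = nabla g (nablas g k T)"
  unfolding nablas_def by simp

lemma nablas_Suc_right: "nablas g (Suc k) T = nablas g k (nabla g T)"
  unfolding nablas_def by (simp add: funpow_swap1)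

lemma lower_correction_Nil [simp]: "lower_correction g x a \<phi> [] = 0"
  unfolding lower_correction_def by simp

lemma lower_correction_cong:
  "(\<And>l. length l = length ls \<Longrightarrow> \<phi> l = \<psi> l) \<Longrightarrow> lower_correction g x a \<phi> ls = lower_correction g x a \<psi> ls"
  unfolding lower_correction_def by (intro sum.cong refl) auto

lemma lower_correction_Cons:
  "lower_correction g x a \<phi> (y # ls) =
     (\<Sum>e\<in>UNIV. christoffel g x e a y * \<phi> (e # ls)) + lower_correction g x a (\<lambda>l. \<phi> (y # l)) ls"
  unfolding lower_correction_def by (simp add: sum.lessThan_Suc_shift del: sum.lessThan_Suc)

lemma lower_correction_snoc:
  "lower_correction g x a \<phi> (ls @ [y]) =
     lower_correction g x a (\<lambda>l. \<phi> (l @ [y])) ls + (\<Sum>e\<in>UNIV. christoffel g x e a y * \<phi> (ls @ [e]))"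
proof -
  have "lower_correction g x a \<phi> (ls @ [y]) =
      (\<Sum>j<length ls. \<Sum>c\<in>UNIV. christoffel g x c a ((ls @ [y]) ! j) * \<phi> ((ls @ [y])[j := c]))
      + (\<Sum>c\<in>UNIV. christoffel g x c a y * \<phi> (ls @ [c]))"
    unfolding lower_correction_def by (simp add: list_update_append)
  also have "(\<Sum>j<length ls. \<Sum>c\<in>UNIV. christoffel g x c a ((ls @ [y]) ! j) * \<phi> ((ls @ [y])[j := c]))
      = lower_correction g x a (\<lambda>l. \<phi> (l @ [y])) ls"
    unfolding lower_correction_def by (intro sum.cong refl) (simp add: nth_append list_update_append)
  finally show ?thesis .
qed

lemma lower_correction_sum:
  "lower_correction g x a (\<lambda>l. \<Sum>i\<in>I. \<phi> i l) ls = (\<Sum>i\<in>I. lower_correction g x a (\<phi> i) ls)"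
proof -
  have "lower_correction g x a (\<lambda>l. \<Sum>i\<in>I. \<phi> i l) ls
      = (\<Sum>j<length ls. \<Sum>c\<in>UNIV. \<Sum>i\<in>I. christoffel g x c a (ls ! j) * \<phi> i (ls[j := c]))"
    unfolding lower_correction_def by (simp add: sum_distrib_left)
  also have "\<dots> = (\<Sum>i\<in>I. \<Sum>j<length ls. \<Sum>c\<in>UNIV. christoffel g x c a (ls ! j) * \<phi> i (ls[j := c]))"
    by (subst sum.swap) (simp only: sum.swap[of _ UNIV I])
  finally show ?thesis unfolding lower_correction_def .
qed

lemma lower_correction_cmult:
  "lower_correction g x a (\<lambda>l. k * \<phi> l) ls = k * lower_correction g x a \<phi> ls"
  unfolding lower_correction_def by (simp add: sum_distrib_left mult.left_commute)

lemma lower_correction_mask_sel_mult: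
  assumes "length cs = length ls"
  shows "lower_correction g x a (\<lambda>l. \<alpha> (mask_sel True cs l) * \<beta> (mask_sel False cs l)) ls
       = lower_correction g x a \<alpha> (mask_sel True cs ls) * \<beta> (mask_sel False cs ls)
         + \<alpha> (mask_sel True cs ls) * lower_correction g x a \<beta> (mask_sel False cs ls)"
  using assms
proof (induction cs arbitrary: ls \<alpha> \<beta>)
  case (Cons c cs)
  then obtain y ls' where ls: "ls = y # ls'" "length cs = length ls'" by (cases ls) auto
  show ?case
  proof (cases c)
    case True
    then show ?thesis
      using Cons.IH[OF ls(2), of "\<lambda>m. \<alpha> (y # m)" \<beta>]
      by (simp add: ls(1) lower_correction_Cons sum_distrib_left sum_distrib_right algebra_simps)
  next
    case False
    then show ?thesis
      using Cons.IH[OF ls(2), of \<alpha> "\<lambda>m. \<beta> (y # m)"]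
      by (simp add: ls(1) lower_correction_Cons sum_distrib_left sum_distrib_right algebra_simps)
  qed
qed simp

definition smooth_tensor :: "(real^'n::finite) set \<Rightarrow> 'n tensor \<Rightarrow> bool" where
  "smooth_tensor U T \<longleftrightarrow> (\<forall>ups ls. smooth_on U (T ups ls))"

lemma smooth_tensor_differentiable: "smooth_tensor U T \<Longrightarrow> x \<in> U \<Longrightarrow> T ups ls differentiable (at x)"
  unfolding smooth_tensor_def by (blast intro: smooth_on_imp_differentiable)

lemma smooth_tensor_nabla:
  assumes metric: "riem_metric U g" and T: "smooth_tensor U T"
  shows "smooth_tensor U (nabla g T)"
  unfolding smooth_tensor_def
proof (intro allI)
  fix ups ls
  have U: "open U" by (rule riem_metric_open[OF metric])
  show "smooth_on U (nabla g T ups ls)"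
  proof (cases ls)
    case Nil
    then have "nabla g T ups ls = (\<lambda>x. 0)" by (simp add: fun_eq_iff nabla_Nil)
    then show ?thesis by (simp add: smooth_on_const)
  next
    case (Cons a l)
    have "smooth_on U (\<lambda>x. pd a (T ups l) x
       + (\<Sum>i<length ups. \<Sum>c\<in>UNIV. christoffel g x (ups ! i) a c * T (ups[i := c]) l x)
       - (\<Sum>j<length l. \<Sum>c\<in>UNIV. christoffel g x c a (l ! j) * T ups (l[j := c]) x))"
      using T unfolding smooth_tensor_def
      by (intro smooth_on_diff[OF U] smooth_on_add[OF U] smooth_on_sum[OF U] smooth_on_mult[OF U]
          smooth_on_pd smooth_on_christoffel[OF metric]) auto
    then show ?thesis
      unfolding Cons nabla_Cons lower_correction_def by simp
  qed
qed

lemma smooth_tensor_nablas: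
  "riem_metric U g \<Longrightarrow> smooth_tensor U T \<Longrightarrow> smooth_tensor U (nablas g k T)"
  by (induction k) (simp_all add: nablas_Suc smooth_tensor_nabla)

lemma nablas_linear:
  assumes metric: "riem_metric U g" and T: "\<And>i. i \<in> I \<Longrightarrow> smooth_tensor U (T i)"
  shows "x \<in> U \<Longrightarrow> nablas g k (\<lambda>ups ls y. \<Sum>i\<in>I. c i * T i ups ls y) ups ls x
           = (\<Sum>i\<in>I. c i * nablas g k (T i) ups ls x)"
proof (induction k arbitrary: ups ls x)
  case (Suc k)
  let ?S = "\<lambda>ups ls y. \<Sum>i\<in>I. c i * T i ups ls y"
  show ?case
  proof (cases ls)
    case Nil
    then show ?thesis by (simp add: nablas_Suc nabla_Nil)
  next
    case (Cons a l)
    have dT: "\<And>i ups l. i \<in> I \<Longrightarrow> nablas g k (T i) ups l differentiable (at x)"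
      using smooth_tensor_differentiable[OF smooth_tensor_nablas[OF metric T] Suc.prems] by blast
    have "pd a (nablas g k ?S ups l) x = pd a (\<lambda>y. \<Sum>i\<in>I. c i * nablas g k (T i) ups l y) x"
      by (rule pd_transform_open[OF riem_metric_open[OF metric] Suc.prems]) (rule Suc.IH)
    also have "\<dots> = (\<Sum>i\<in>I. c i * pd a (nablas g k (T i) ups l) x)"
      using dT by (simp add: pd_sum differentiable_mult pd_cmult)
    finally have pd: "pd a (nablas g k ?S ups l) x = \<dots>" .
    have up: "(\<Sum>j<length ups. \<Sum>e\<in>UNIV. christoffel g x (ups ! j) a e * nablas g k ?S (ups[j := e]) l x)
       = (\<Sum>i\<in>I. c i * (\<Sum>j<length ups. \<Sum>e\<in>UNIV.
            christoffel g x (ups ! j) a e * nablas g k (T i) (ups[j := e]) l x))"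
    proof -
      have "(\<Sum>j<length ups. \<Sum>e\<in>UNIV. christoffel g x (ups ! j) a e * nablas g k ?S (ups[j := e]) l x)
          = (\<Sum>j<length ups. \<Sum>e\<in>UNIV. \<Sum>i\<in>I.
               c i * (christoffel g x (ups ! j) a e * nablas g k (T i) (ups[j := e]) l x))"
        by (simp add: Suc.IH[OF Suc.prems] sum_distrib_left mult.left_commute)
      also have "\<dots> = (\<Sum>i\<in>I. \<Sum>j<length ups. \<Sum>e\<in>UNIV.
               c i * (christoffel g x (ups ! j) a e * nablas g k (T i) (ups[j := e]) l x))"
        by (subst sum.swap) (simp only: sum.swap[of _ UNIV I])
      finally show ?thesis by (simp only: sum_distrib_left)
    qed
    have low: "lower_correction g x a (\<lambda>l'. nablas g k ?S ups l' x) l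
       = (\<Sum>i\<in>I. c i * lower_correction g x a (\<lambda>l'. nablas g k (T i) ups l' x) l)"
      by (simp add: Suc.IH[OF Suc.prems] lower_correction_sum lower_correction_cmult)
    show ?thesis unfolding Cons nablas_Suc nabla_Cons pd up low
      by (simp add: sum_distrib_left[symmetric] sum.distrib sum_subtractf algebra_simps)
  qed
qed simp

text \<open>The summand of the Leibniz rule belonging to the mask \<open>cs\<close>: the slots marked \<open>True\<close> are
  differentiated on the vector field \<open>A\<close>, the others on the covector field \<open>B\<close>.\<close>

definition leibniz_term ::
    "(real^'n::finite \<Rightarrow> 'n \<Rightarrow> 'n \<Rightarrow> real) \<Rightarrow> 'n tensor \<Rightarrow> 'n tensor \<Rightarrow> bool list \<Rightarrow> 'n list \<Rightarrow> real^'n \<Rightarrow> real" where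
  "leibniz_term g A B cs ls x = (\<Sum>c\<in>UNIV. nablas g (count_list cs True) A [c] (mask_sel True cs ls) x
                                 * nablas g (count_list cs False) B [] (mask_sel False cs ls @ [c]) x)"

lemma leibniz_term_differentiable:
  assumes metric: "riem_metric U g" and A: "smooth_tensor U A" and B: "smooth_tensor U B" and x: "x \<in> U"
  shows "leibniz_term g A B cs ls differentiable (at x)"
  unfolding leibniz_term_def[abs_def]
  by (intro differentiable_sum ballI differentiable_mult
      smooth_tensor_differentiable[OF smooth_tensor_nablas[OF metric A] x]
      smooth_tensor_differentiable[OF smooth_tensor_nablas[OF metric B] x]) simp

lemma leibniz_term_step:
  assumes metric: "riem_metric U g" and A: "smooth_tensor U A" and B: "smooth_tensor U B" and x: "x \<in> U"
    and len: "length cs = length ls"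
  shows "pd a (leibniz_term g A B cs ls) x - lower_correction g x a (\<lambda>l. leibniz_term g A B cs l x) ls
       = leibniz_term g A B (True # cs) (a # ls) x + leibniz_term g A B (False # cs) (a # ls) x"
proof -
  define i j where "i = count_list cs True" and "j = count_list cs False"
  define L1 L2 where "L1 = mask_sel True cs ls" and "L2 = mask_sel False cs ls"
  define NA NB where "NA c = nablas g i A [c] L1" and "NB c = nablas g j B [] (L2 @ [c])" for c
  define \<alpha> \<beta> where "\<alpha> c m = nablas g i A [c] m x" and "\<beta> c m = nablas g j B [] (m @ [c]) x" for c m
  have dA: "NA c differentiable (at x)" for c
    unfolding NA_def by (rule smooth_tensor_differentiable[OF smooth_tensor_nablas[OF metric A] x])
  have dB: "NB c differentiable (at x)" for c
    unfolding NB_def by (rule smooth_tensor_differentiable[OF smooth_tensor_nablas[OF metric B] x])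
  have unfold_term: "leibniz_term g A B cs = (\<lambda>ls y. \<Sum>c\<in>UNIV. nablas g i A [c] (mask_sel True cs ls) y
                                                * nablas g j B [] (mask_sel False cs ls @ [c]) y)"
    unfolding leibniz_term_def i_def j_def by (simp add: fun_eq_iff)
  have "pd a (leibniz_term g A B cs ls) x = pd a (\<lambda>y. \<Sum>c\<in>UNIV. NA c y * NB c y) x"
    unfolding unfold_term NA_def NB_def L1_def L2_def ..
  also have "\<dots> = (\<Sum>c\<in>UNIV. pd a (NA c) x * NB c x + NA c x * pd a (NB c) x)"
    using dA dB by (simp add: pd_sum differentiable_mult pd_mult)
  finally have P1: "pd a (leibniz_term g A B cs ls) x = \<dots>" .
  have "lower_correction g x a (\<lambda>l. leibniz_term g A B cs l x) ls
      = lower_correction g x a (\<lambda>l. \<Sum>c\<in>UNIV. \<alpha> c (mask_sel True cs l) * \<beta> c (mask_sel False cs l)) ls"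
    unfolding unfold_term \<alpha>_def \<beta>_def ..
  also have "\<dots> = (\<Sum>c\<in>UNIV. lower_correction g x a (\<lambda>l. \<alpha> c (mask_sel True cs l) * \<beta> c (mask_sel False cs l)) ls)"
    by (rule lower_correction_sum)
  also have "\<dots> = (\<Sum>c\<in>UNIV. lower_correction g x a (\<alpha> c) L1 * NB c x + NA c x * lower_correction g x a (\<beta> c) L2)"
    unfolding NA_def NB_def \<alpha>_def[symmetric] \<beta>_def[symmetric] L1_def L2_def
    by (rule sum.cong[OF refl]) (rule lower_correction_mask_sel_mult[OF len])
  finally have P2: "lower_correction g x a (\<lambda>l. leibniz_term g A B cs l x) ls = \<dots>" .
  have P3: "leibniz_term g A B (True # cs) (a # ls) x
      = (\<Sum>c\<in>UNIV. (pd a (NA c) x + (\<Sum>e\<in>UNIV. christoffel g x c a e * NA e x)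
                     - lower_correction g x a (\<alpha> c) L1) * NB c x)"
    unfolding leibniz_term_def
    by (simp add: nablas_Suc nabla_Cons_vector i_def j_def L1_def L2_def NA_def NB_def \<alpha>_def[abs_def])
  have P4: "leibniz_term g A B (False # cs) (a # ls) x
      = (\<Sum>c\<in>UNIV. NA c x * (pd a (NB c) x - (lower_correction g x a (\<beta> c) L2
                     + (\<Sum>e\<in>UNIV. christoffel g x e a c * NB e x))))"
    unfolding leibniz_term_def
    by (simp add: nablas_Suc nabla_Cons_scalar lower_correction_snoc i_def j_def L1_def L2_def
        NA_def NB_def \<beta>_def[abs_def])
  txt \<open>The connection terms acting on the contracted index cancel.\<close>
  have cancel: "(\<Sum>c\<in>UNIV. (\<Sum>e\<in>UNIV. christoffel g x c a e * NA e x) * NB c x)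
      = (\<Sum>c\<in>UNIV. NA c x * (\<Sum>e\<in>UNIV. christoffel g x e a c * NB e x))"
    by (rule sum_sum_mult_transpose)
  show ?thesis unfolding P1 P2 P3 P4
    using cancel by (simp add: algebra_simps sum.distrib sum_subtractf)
qed

lemma sum_UNIV_bool: "(\<Sum>b\<in>(UNIV::bool set). F b) = F True + F False"
  by (simp add: UNIV_bool add.commute)

theorem nablas_contraction:
  assumes metric: "riem_metric U g" and A: "smooth_tensor U A" and B: "smooth_tensor U B"
  shows "x \<in> U \<Longrightarrow> length ls = k \<Longrightarrow>
    nablas g k (\<lambda>ups ls y. \<Sum>c\<in>UNIV. A [c] [] y * B [] [c] y) [] ls x
      = (\<Sum>cs\<in>lists_of_length k. leibniz_term g A B cs ls x)"
proof (induction k arbitrary: ls x)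
  case 0
  then show ?case by (simp add: leibniz_term_def)
next
  case (Suc k)
  let ?G = "\<lambda>ups ls y. \<Sum>c\<in>UNIV. A [c] [] y * B [] [c] y"
  obtain a l where ls: "ls = a # l" "length l = k" using Suc.prems(2) by (cases ls) auto
  have "nablas g (Suc k) ?G [] ls x
      = pd a (nablas g k ?G [] l) x - lower_correction g x a (\<lambda>l'. nablas g k ?G [] l' x) l"
    unfolding ls nablas_Suc nabla_Cons_scalar ..
  also have "pd a (nablas g k ?G [] l) x = pd a (\<lambda>y. \<Sum>cs\<in>lists_of_length k. leibniz_term g A B cs l y) x"
    by (rule pd_transform_open[OF riem_metric_open[OF metric] Suc.prems(1)]) (rule Suc.IH[OF _ ls(2)])
  also have "\<dots> = (\<Sum>cs\<in>lists_of_length k. pd a (leibniz_term g A B cs l) x)"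
    by (rule pd_sum) (rule leibniz_term_differentiable[OF metric A B Suc.prems(1)])
  also have "lower_correction g x a (\<lambda>l'. nablas g k ?G [] l' x) l
      = (\<Sum>cs\<in>lists_of_length k. lower_correction g x a (\<lambda>l'. leibniz_term g A B cs l' x) l)"
    unfolding lower_correction_sum[symmetric]
    by (rule lower_correction_cong) (rule Suc.IH[OF Suc.prems(1)], simp add: ls(2))
  also have "(\<Sum>cs\<in>lists_of_length k. pd a (leibniz_term g A B cs l) x)
      - (\<Sum>cs\<in>lists_of_length k. lower_correction g x a (\<lambda>l'. leibniz_term g A B cs l' x) l)
      = (\<Sum>cs\<in>lists_of_length k. leibniz_term g A B (True # cs) (a # l) x
                                 + leibniz_term g A B (False # cs) (a # l) x)"
    unfolding sum_subtractf[symmetric]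
    by (intro sum.cong refl leibniz_term_step[OF metric A B Suc.prems(1)]) (simp add: lists_of_length_def ls(2))
  also have "\<dots> = (\<Sum>cs\<in>lists_of_length (Suc k). leibniz_term g A B cs (a # l) x)"
    unfolding sum_lists_of_length_Suc sum_UNIV_bool sum.distrib ..
  finally show ?case unfolding ls .
qed

theorem nablas_raise_index:
  assumes metric: "riem_metric U g" and A: "smooth_tensor U A" and B: "smooth_tensor U B"
    and raise: "\<And>y c. y \<in> U \<Longrightarrow> A [c] [] y = (\<Sum>e\<in>UNIV. ginv g y c e * B [] [e] y)"
  shows "x \<in> U \<Longrightarrow> length ls = k \<Longrightarrow>
    nablas g k A [c] ls x = (\<Sum>e\<in>UNIV. ginv g x c e * nablas g k B [] (ls @ [e]) x)"
proof (induction k arbitrary: ls x c)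
  case 0
  then show ?case using raise by simp
next
  case (Suc k)
  have x: "x \<in> U" by (rule Suc.prems(1))
  obtain a l where ls: "ls = a # l" "length l = k" using Suc.prems(2) by (cases ls) auto
  define Y where "Y e = nablas g k B [] (l @ [e])" for e
  have dY: "Y e differentiable (at x)" for e
    unfolding Y_def by (rule smooth_tensor_differentiable[OF smooth_tensor_nablas[OF metric B] x])
  have "pd a (nablas g k A [c] l) x = pd a (\<lambda>y. \<Sum>e\<in>UNIV. ginv g y c e * Y e y) x"
    unfolding Y_def by (rule pd_transform_open[OF riem_metric_open[OF metric] x]) (rule Suc.IH[OF _ ls(2)])
  also have "\<dots> = (\<Sum>e\<in>UNIV. pd a (\<lambda>y. ginv g y c e) x * Y e x + ginv g x c e * pd a (Y e) x)"
    using dY differentiable_ginv[OF metric x] by (simp add: pd_sum differentiable_mult pd_mult)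
  finally have L1: "pd a (nablas g k A [c] l) x = \<dots>" .
  have L2: "(\<Sum>e\<in>UNIV. christoffel g x c a e * nablas g k A [e] l x)
      = (\<Sum>e\<in>UNIV. christoffel g x c a e * (\<Sum>d\<in>UNIV. ginv g x e d * Y d x))"
    unfolding Y_def using Suc.IH[OF x ls(2)] by simp
  have L3: "lower_correction g x a (\<lambda>l'. nablas g k A [c] l' x) l
      = (\<Sum>e\<in>UNIV. ginv g x c e * lower_correction g x a (\<lambda>l'. nablas g k B [] (l' @ [e]) x) l)"
    unfolding lower_correction_sum[symmetric] lower_correction_cmult[symmetric]
    by (rule lower_correction_cong) (rule Suc.IH[OF x], simp add: ls(2))
  have R: "nablas g (Suc k) B [] (ls @ [e]) x
      = pd a (Y e) x - (lower_correction g x a (\<lambda>l'. nablas g k B [] (l' @ [e]) x) l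
                        + (\<Sum>d\<in>UNIV. christoffel g x d a e * Y d x))" for e
    unfolding ls Y_def by (simp add: nablas_Suc nabla_Cons_scalar lower_correction_snoc)
  txt \<open>The remaining terms vanish because the inverse metric is parallel.\<close>
  have parallel: "(\<Sum>e\<in>UNIV. pd a (\<lambda>y. ginv g y c e) x * Y e x)
     + (\<Sum>e\<in>UNIV. christoffel g x c a e * (\<Sum>d\<in>UNIV. ginv g x e d * Y d x))
     + (\<Sum>e\<in>UNIV. ginv g x c e * (\<Sum>d\<in>UNIV. christoffel g x d a e * Y d x)) = 0"
    by (rule sum_nabla_ginv_eq_0[OF metric x])
  have "nablas g (Suc k) A [c] ls x = pd a (nablas g k A [c] l) x
      + (\<Sum>e\<in>UNIV. christoffel g x c a e * nablas g k A [e] l x)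
      - lower_correction g x a (\<lambda>l'. nablas g k A [c] l' x) l"
    by (simp add: ls(1) nablas_Suc nabla_Cons_vector)
  then show ?case
    unfolding R L1 L2 L3
    using parallel by (simp add: algebra_simps sum.distrib sum_subtractf sum_distrib_left)
qed

definition sym_last_two :: "(real^'n::finite) set \<Rightarrow> 'n tensor \<Rightarrow> nat \<Rightarrow> bool" where
  "sym_last_two U T n \<longleftrightarrow>
     (\<forall>l b c y. length l = n \<longrightarrow> y \<in> U \<longrightarrow> T [] (l @ [b, c]) y = T [] (l @ [c, b]) y)"

lemma lower_correction_snoc2:
  "lower_correction g x a \<phi> (l @ [b, c]) = lower_correction g x a (\<lambda>m. \<phi> (m @ [b, c])) l
   + (\<Sum>e\<in>UNIV. christoffel g x e a b * \<phi> (l @ [e, c])) + (\<Sum>e\<in>UNIV. christoffel g x e a c * \<phi> (l @ [b, e]))"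
  using lower_correction_snoc[of g x a \<phi> "l @ [b]" c]
    lower_correction_snoc[of g x a "\<lambda>m. \<phi> (m @ [c])" l b]
  by simp

lemma sym_last_two_nabla:
  assumes metric: "riem_metric U g" and S: "sym_last_two U T n"
  shows "sym_last_two U (nabla g T) (Suc n)"
  unfolding sym_last_two_def
proof (intro allI impI)
  fix l :: "'a list" and b c y assume l: "length l = Suc n" and y: "y \<in> U"
  obtain a l' where l': "l = a # l'" "length l' = n" using l by (cases l) auto
  have S': "T [] (m @ [b, c]) y = T [] (m @ [c, b]) y" if "length m = n" for m b c
    using S y that unfolding sym_last_two_def by blast
  have P: "pd a (T [] (l' @ [b, c])) y = pd a (T [] (l' @ [c, b])) y"
    by (rule pd_transform_open[OF riem_metric_open[OF metric] y])
      (use S l'(2) in \<open>auto simp: sym_last_two_def\<close>)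
  have "lower_correction g y a (\<lambda>m. T [] (m @ [b, c]) y) l' = lower_correction g y a (\<lambda>m. T [] (m @ [c, b]) y) l'"
    by (rule lower_correction_cong) (rule S', simp add: l'(2))
  then have L: "lower_correction g y a (\<lambda>m. T [] m y) (l' @ [b, c]) = lower_correction g y a (\<lambda>m. T [] m y) (l' @ [c, b])"
    unfolding lower_correction_snoc2 using S'[OF l'(2)] by simp
  show "nabla g T [] (l @ [b, c]) y = nabla g T [] (l @ [c, b]) y"
    unfolding l'(1) by (simp add: nabla_Cons_scalar P L)
qed

lemma sym_last_two_nablas:
  "riem_metric U g \<Longrightarrow> sym_last_two U T n \<Longrightarrow> sym_last_two U (nablas g k T) (n + k)"
  by (induction k) (simp_all add: nablas_Suc sym_last_two_nabla)

section \<open>The normal fields contracted with a fixed vector\<close>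

definition w_up ::
    "(real^'n::finite \<Rightarrow> 'n \<Rightarrow> 'n \<Rightarrow> real) \<Rightarrow> ('k::finite \<Rightarrow> real^'n \<Rightarrow> real) \<Rightarrow> ('k \<Rightarrow> real) \<Rightarrow> real^'n \<Rightarrow> 'n \<Rightarrow> real" where
  "w_up g s v x a = (\<Sum>\<gamma>\<in>UNIV. v \<gamma> * nup g s x a \<gamma>)"

definition w_low :: "('k::finite \<Rightarrow> real^'n::finite \<Rightarrow> real) \<Rightarrow> ('k \<Rightarrow> real) \<Rightarrow> real^'n \<Rightarrow> 'n \<Rightarrow> real" where
  "w_low s v x a = (\<Sum>\<gamma>\<in>UNIV. v \<gamma> * nlow s x a \<gamma>)"

definition w_up_tensor ::
    "(real^'n::finite \<Rightarrow> 'n \<Rightarrow> 'n \<Rightarrow> real) \<Rightarrow> ('k::finite \<Rightarrow> real^'n \<Rightarrow> real) \<Rightarrow> ('k \<Rightarrow> real) \<Rightarrow> 'n tensor" where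
  "w_up_tensor g s v ups ls x = w_up g s v x (hd ups)"

text \<open>The covector is read off the last lower slot, so that the slots added in front by
  \<^const>\<open>nabla\<close> are the differentiation slots.\<close>

definition w_low_tensor :: "('k::finite \<Rightarrow> real^'n::finite \<Rightarrow> real) \<Rightarrow> ('k \<Rightarrow> real) \<Rightarrow> 'n tensor" where
  "w_low_tensor s v ups ls x = w_low s v x (last ls)"

definition w_norm_tensor ::
    "(real^'n::finite \<Rightarrow> 'n \<Rightarrow> 'n \<Rightarrow> real) \<Rightarrow> ('k::finite \<Rightarrow> real^'n \<Rightarrow> real) \<Rightarrow> ('k \<Rightarrow> real) \<Rightarrow> 'n tensor" where
  "w_norm_tensor g s v = (\<lambda>ups ls y. \<Sum>c\<in>UNIV. w_up_tensor g s v [c] [] y * w_low_tensor s v [] [c] y)"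

text \<open>In index notation, \<open>w_derivative_low g s v x p b\<close> is
  \<open>w\<^sup>a\<^sup>1 \<cdots> w\<^sup>a\<^sup>p \<nabla>\<^sub>a\<^sub>1\<^sub>\<cdots>\<^sub>a\<^sub>p w\<^sub>b\<close>, \<open>w_derivative_up\<close> is the same with \<open>w\<^sup>b\<close>, and
  \<open>w_norm_derivative g s v x p b\<close> is \<open>w\<^sup>a\<^sup>1 \<cdots> w\<^sup>a\<^sup>p\<^sup>-\<^sup>1 \<nabla>\<^sub>a\<^sub>1\<^sub>\<cdots>\<^sub>a\<^sub>p\<^sub>-\<^sub>1\<^sub>b (w\<^sup>c w\<^sub>c)\<close>.\<close>

definition w_derivative_low ::
    "(real^'n::finite \<Rightarrow> 'n \<Rightarrow> 'n \<Rightarrow> real) \<Rightarrow> ('k::finite \<Rightarrow> real^'n \<Rightarrow> real) \<Rightarrow> ('k \<Rightarrow> real) \<Rightarrow> real^'n \<Rightarrow> nat \<Rightarrow> 'n \<Rightarrow> real" where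
  "w_derivative_low g s v x p b = (\<Sum>l\<in>lists_of_length p.
     prod_list (map (w_up g s v x) l) * nablas g p (w_low_tensor s v) [] (l @ [b]) x)"

definition w_derivative_up ::
    "(real^'n::finite \<Rightarrow> 'n \<Rightarrow> 'n \<Rightarrow> real) \<Rightarrow> ('k::finite \<Rightarrow> real^'n \<Rightarrow> real) \<Rightarrow> ('k \<Rightarrow> real) \<Rightarrow> real^'n \<Rightarrow> nat \<Rightarrow> 'n \<Rightarrow> real" where
  "w_derivative_up g s v x p b = (\<Sum>l\<in>lists_of_length p.
     prod_list (map (w_up g s v x) l) * nablas g p (w_up_tensor g s v) [b] l x)"

definition w_norm_derivative ::
    "(real^'n::finite \<Rightarrow> 'n \<Rightarrow> 'n \<Rightarrow> real) \<Rightarrow> ('k::finite \<Rightarrow> real^'n \<Rightarrow> real) \<Rightarrow> ('k \<Rightarrow> real) \<Rightarrow> real^'n \<Rightarrow> nat \<Rightarrow> 'n \<Rightarrow> real" where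
  "w_norm_derivative g s v x p b = (\<Sum>l\<in>lists_of_length (p - 1).
     prod_list (map (w_up g s v x) l) * nablas g p (w_norm_tensor g s v) [] (l @ [b]) x)"

text \<open>The Leibniz summand for the mask \<open>cs\<close> (of length \<open>Suc q\<close>) in the \<open>Suc q\<close>-th covariant
  derivative of \<open>w\<^sup>c w\<^sub>c\<close>, contracted with \<open>w\<close> in its first \<open>q\<close> slots.\<close>

definition contracted_leibniz_term ::
    "(real^'n::finite \<Rightarrow> 'n \<Rightarrow> 'n \<Rightarrow> real) \<Rightarrow> ('k::finite \<Rightarrow> real^'n \<Rightarrow> real) \<Rightarrow> ('k \<Rightarrow> real) \<Rightarrow> real^'n
       \<Rightarrow> nat \<Rightarrow> 'n \<Rightarrow> bool list \<Rightarrow> real" where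
  "contracted_leibniz_term g s v x q b cs = (\<Sum>l\<in>lists_of_length q. prod_list (map (w_up g s v x) l) *
     leibniz_term g (w_up_tensor g s v) (w_low_tensor s v) cs (l @ [b]) x)"

lemma w_up_eq_sum_ginv_w_low: "w_up g s v x c = (\<Sum>e\<in>UNIV. ginv g x c e * w_low s v x e)"
  unfolding w_up_def w_low_def nup_def
  by (simp add: sum_distrib_left mult_ac) (rule sum.swap)

lemma nprod_Cons: "nprod g s x (a # as) (\<beta> # \<beta>s) = nup g s x a \<beta> * nprod g s x as \<beta>s"
  unfolding nprod_def by (simp add: prod.lessThan_Suc_shift del: prod.lessThan_Suc)

lemma nprod_append: "length as \<le> length \<beta>s \<Longrightarrow> nprod g s x as (\<beta>s @ \<gamma>s) = nprod g s x as \<beta>s"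
  unfolding nprod_def by (intro prod.cong) (auto simp: nth_append)

lemma sum_lists_nprod:
  "length as = r \<Longrightarrow>
     (\<Sum>l\<in>lists_of_length r. prod_list (map v l) * nprod g s x as l) = prod_list (map (w_up g s v x) as)"
proof (induction as arbitrary: r)
  case Nil
  then show ?case by (simp add: nprod_def)
next
  case (Cons a as)
  then obtain r' where r: "r = Suc r'" "length as = r'" by auto
  have "(\<Sum>l\<in>lists_of_length r. prod_list (map v l) * nprod g s x (a # as) l)
      = (\<Sum>\<beta>\<in>UNIV. \<Sum>l\<in>lists_of_length r'. (v \<beta> * nup g s x a \<beta>) * (prod_list (map v l) * nprod g s x as l))"
    by (simp add: r(1) sum_lists_of_length_Suc nprod_Cons mult_ac)
  also have "\<dots> = (\<Sum>\<beta>\<in>UNIV. v \<beta> * nup g s x a \<beta>) * (\<Sum>l\<in>lists_of_length r'. prod_list (map v l) * nprod g s x as l)"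
    by (simp add: sum_product)
  finally show ?case using Cons.IH[OF r(2)] by (simp add: w_up_def)
qed

lemma sum_lists_weighted_nprod:
  fixes g :: "real^'n::finite \<Rightarrow> 'n \<Rightarrow> 'n \<Rightarrow> real" and s :: "'k::finite \<Rightarrow> real^'n \<Rightarrow> real"
  shows "(\<Sum>\<beta>s\<in>lists_of_length (r + t). prod_list (map v \<beta>s) *
      (\<Sum>as\<in>lists_of_length r. nprod g s x as \<beta>s * Z (drop r \<beta>s) as))
   = (\<Sum>as\<in>lists_of_length r. prod_list (map (w_up g s v x) as) *
      (\<Sum>\<tau>s\<in>lists_of_length t. prod_list (map v \<tau>s) * Z \<tau>s as))"
proof -
  have "(\<Sum>\<beta>s\<in>lists_of_length (r + t). prod_list (map v \<beta>s) *
      (\<Sum>as\<in>lists_of_length r. nprod g s x as \<beta>s * Z (drop r \<beta>s) as))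
    = (\<Sum>l\<in>lists_of_length r. \<Sum>\<tau>s\<in>lists_of_length t. \<Sum>as\<in>lists_of_length r.
        (prod_list (map v l) * nprod g s x as l) * (prod_list (map v \<tau>s) * Z \<tau>s as))"
    unfolding sum_lists_of_length_add
    by (intro sum.cong refl) (auto simp: lists_of_length_def nprod_append sum_distrib_left mult_ac)
  also have "\<dots> = (\<Sum>as\<in>lists_of_length r. \<Sum>l\<in>lists_of_length r. \<Sum>\<tau>s\<in>lists_of_length t.
        (prod_list (map v l) * nprod g s x as l) * (prod_list (map v \<tau>s) * Z \<tau>s as))"
    by (subst sum.swap) (intro sum.cong refl sum.swap)
  also have "\<dots> = (\<Sum>as\<in>lists_of_length r. prod_list (map (w_up g s v x) as) *
      (\<Sum>\<tau>s\<in>lists_of_length t. prod_list (map v \<tau>s) * Z \<tau>s as))"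
  proof (intro sum.cong refl)
    fix as :: "'n list" assume "as \<in> lists_of_length r"
    then have "length as = r" by (simp add: lists_of_length_def)
    then show "(\<Sum>l\<in>lists_of_length r. \<Sum>\<tau>s\<in>lists_of_length t.
        (prod_list (map v l) * nprod g s x as l) * (prod_list (map v \<tau>s) * Z \<tau>s as))
      = prod_list (map (w_up g s v x) as) * (\<Sum>\<tau>s\<in>lists_of_length t. prod_list (map v \<tau>s) * Z \<tau>s as)"
      by (simp add: sum_product[symmetric] sum_lists_nprod)
  qed
  finally show ?thesis .
qed

lemma w_norm_tensor_eq_sum_G_tensor:
  fixes g :: "real^'n::finite \<Rightarrow> 'n \<Rightarrow> 'n \<Rightarrow> real" and s :: "'k::finite \<Rightarrow> real^'n \<Rightarrow> real"
  shows "w_norm_tensor g s v ups ls y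
       = (\<Sum>p\<in>UNIV \<times> UNIV. (v (fst p) * v (snd p)) * G_tensor g s (fst p) (snd p) ups ls y)"
proof -
  have "w_norm_tensor g s v ups ls y
      = (\<Sum>c\<in>UNIV. \<Sum>e\<in>UNIV. \<Sum>\<delta>\<in>UNIV. \<Sum>\<gamma>\<in>UNIV. v \<gamma> * v \<delta> * (ginv g y c e * nlow s y c \<gamma> * nlow s y e \<delta>))"
    by (simp add: w_norm_tensor_def w_up_tensor_def w_low_tensor_def w_up_eq_sum_ginv_w_low w_low_def
        sum_distrib_left sum_distrib_right mult_ac)
  also have "\<dots> = (\<Sum>\<delta>\<in>UNIV. \<Sum>\<gamma>\<in>UNIV. \<Sum>c\<in>UNIV. \<Sum>e\<in>UNIV. v \<gamma> * v \<delta> * (ginv g y c e * nlow s y c \<gamma> * nlow s y e \<delta>))"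
    by (simp only: sum.swap[of _ "UNIV :: 'n set" "UNIV :: 'k set"])
  also have "\<dots> = (\<Sum>\<gamma>\<in>UNIV. \<Sum>\<delta>\<in>UNIV. \<Sum>c\<in>UNIV. \<Sum>e\<in>UNIV. v \<gamma> * v \<delta> * (ginv g y c e * nlow s y c \<gamma> * nlow s y e \<delta>))"
    by (rule sum.swap)
  also have "\<dots> = (\<Sum>\<gamma>\<in>UNIV. \<Sum>\<delta>\<in>UNIV. v \<gamma> * v \<delta> * Gmat g s \<gamma> \<delta> y)"
    by (simp add: Gmat_def sum_distrib_left mult_ac)
  also have "\<dots> = (\<Sum>p\<in>UNIV \<times> UNIV. (v (fst p) * v (snd p)) * G_tensor g s (fst p) (snd p) ups ls y)"
    by (simp add: G_tensor_def sum.cartesian_product case_prod_beta)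
  finally show ?thesis .
qed

context
  fixes U :: "(real^'n::finite) set" and g :: "real^'n \<Rightarrow> 'n \<Rightarrow> 'n \<Rightarrow> real"
    and s :: "'k::finite \<Rightarrow> real^'n \<Rightarrow> real" and \<Lambda> :: "(real^'n) set"
  assumes metric: "riem_metric U g" and defmap: "defining_map U s \<Lambda>"
begin

lemma open_U: "open U"
  by (rule riem_metric_open[OF metric])

lemma mem_U_if_mem_Lambda: "x \<in> \<Lambda> \<Longrightarrow> x \<in> U"
  using defmap unfolding defining_map_def by blast

lemma smooth_on_nlow: "smooth_on U (\<lambda>x. nlow s x c \<gamma>)"
  using defmap unfolding defining_map_def nlow_def by (auto intro: smooth_on_pd)

lemma smooth_on_nup: "smooth_on U (\<lambda>x. nup g s x c \<gamma>)"
  unfolding nup_def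
  by (intro smooth_on_sum[OF open_U] smooth_on_mult[OF open_U] smooth_on_ginv[OF metric] smooth_on_nlow)

lemma smooth_on_Gmat: "smooth_on U (Gmat g s \<gamma> \<delta>)"
  unfolding Gmat_def[abs_def]
  by (intro smooth_on_sum[OF open_U] smooth_on_mult[OF open_U] smooth_on_ginv[OF metric] smooth_on_nlow)

lemma smooth_tensor_w_low: "smooth_tensor U (w_low_tensor s v)"
  unfolding smooth_tensor_def w_low_tensor_def w_low_def
  by (intro allI smooth_on_sum[OF open_U] smooth_on_mult[OF open_U] smooth_on_const smooth_on_nlow)

lemma smooth_tensor_w_up: "smooth_tensor U (w_up_tensor g s v)"
  unfolding smooth_tensor_def w_up_tensor_def w_up_def
  by (intro allI smooth_on_sum[OF open_U] smooth_on_mult[OF open_U] smooth_on_const smooth_on_nup)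

lemma smooth_tensor_G_tensor: "smooth_tensor U (G_tensor g s \<gamma> \<delta>)"
  unfolding smooth_tensor_def G_tensor_def using smooth_on_Gmat by (simp add: eta_contract_eq)

lemma smooth_tensor_nup_tensor: "smooth_tensor U (nup_tensor g s \<beta>)"
  unfolding smooth_tensor_def nup_tensor_def using smooth_on_nup by blast

lemma nablas_w_up_tensor:
  "x \<in> U \<Longrightarrow> length l = k \<Longrightarrow>
     nablas g k (w_up_tensor g s v) [c] l x = (\<Sum>e\<in>UNIV. ginv g x c e * nablas g k (w_low_tensor s v) [] (l @ [e]) x)"
  by (rule nablas_raise_index[OF metric smooth_tensor_w_up smooth_tensor_w_low])
    (simp add: w_up_tensor_def w_low_tensor_def w_up_eq_sum_ginv_w_low)

lemma w_derivative_up_eq_sum_ginv: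
  "x \<in> U \<Longrightarrow> w_derivative_up g s v x p b = (\<Sum>e\<in>UNIV. ginv g x b e * w_derivative_low g s v x p e)"
proof -
  assume x: "x \<in> U"
  have "w_derivative_up g s v x p b = (\<Sum>l\<in>lists_of_length p. prod_list (map (w_up g s v x) l) *
      (\<Sum>e\<in>UNIV. ginv g x b e * nablas g p (w_low_tensor s v) [] (l @ [e]) x))"
    unfolding w_derivative_up_def
    by (intro sum.cong refl) (simp add: nablas_w_up_tensor[OF x] lists_of_length_def)
  also have "\<dots> = (\<Sum>e\<in>UNIV. ginv g x b e * w_derivative_low g s v x p e)"
    unfolding w_derivative_low_def by (simp add: sum_distrib_left mult_ac) (rule sum.swap)
  finally show ?thesis .
qed

text \<open>Since \<open>w\<^sub>a = v\<^sup>\<gamma> \<partial>\<^sub>a s\<^sub>\<gamma>\<close> is a gradient, its covariant derivative is symmetric (Schwarz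
  together with the symmetry of the Christoffel symbols), and this symmetry propagates to all
  higher covariant derivatives in the last two slots.\<close>

lemma sym_last_two_nabla_w_low: "sym_last_two U (nabla g (w_low_tensor s v)) 0"
  unfolding sym_last_two_def
proof (intro allI impI)
  fix l :: "'n list" and b c y assume "length l = 0" and y: "y \<in> U"
  have ds: "pd a (s \<gamma>) differentiable (at y)" for a \<gamma>
    using smooth_on_imp_differentiable[OF smooth_on_nlow y] by (simp add: nlow_def[abs_def])
  have "pd b (w_low_tensor s v [] [c]) y = (\<Sum>\<gamma>\<in>UNIV. v \<gamma> * pd b (pd c (s \<gamma>)) y)" for b c
    unfolding w_low_tensor_def[abs_def] w_low_def nlow_def
    using ds by (simp add: pd_sum differentiable_mult pd_cmult)
  moreover have "pd b (pd c (s \<gamma>)) y = pd c (pd b (s \<gamma>)) y" for \<gamma>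
    using defmap y unfolding defining_map_def by (blast intro: pd_commute[OF open_U])
  ultimately show "nabla g (w_low_tensor s v) [] (l @ [b, c]) y = nabla g (w_low_tensor s v) [] (l @ [c, b]) y"
    using \<open>length l = 0\<close>
    by (simp add: nabla_Cons_scalar lower_correction_Cons christoffel_sym[OF metric y, of _ b c]
        w_low_tensor_def)
qed

lemma nablas_w_low_swap:
  "y \<in> U \<Longrightarrow> length l = q \<Longrightarrow>
     nablas g (Suc q) (w_low_tensor s v) [] (l @ [b, c]) y = nablas g (Suc q) (w_low_tensor s v) [] (l @ [c, b]) y"
  using sym_last_two_nablas[OF metric sym_last_two_nabla_w_low, of q]
  unfolding nablas_Suc_right sym_last_two_def by simp

lemma w_derivative_low_Suc:
  assumes x: "x \<in> U"
  shows "(\<Sum>l\<in>lists_of_length q. prod_list (map (w_up g s v x) l) *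
            (\<Sum>c\<in>UNIV. w_up g s v x c * nablas g (Suc q) (w_low_tensor s v) [] (l @ [b, c]) x))
       = w_derivative_low g s v x (Suc q) b"
  unfolding w_derivative_low_def sum_lists_of_length_snoc
  by (intro sum.cong refl)
    (simp add: sum_distrib_left mult_ac nablas_w_low_swap[OF x, where q = q and b = b] lists_of_length_def)

lemma contracted_leibniz_term_False:
  assumes "length cs = q"
  shows "contracted_leibniz_term g s v x q b (cs @ [False])
       = (\<Sum>c\<in>UNIV. w_derivative_up g s v x (count_list cs True) c *
            (\<Sum>l\<in>lists_of_length (count_list cs False). prod_list (map (w_up g s v x) l) *
               nablas g (Suc (count_list cs False)) (w_low_tensor s v) [] (l @ [b, c]) x))"
  unfolding contracted_leibniz_term_def w_derivative_up_def sum_lists_weighted_mask_sel[OF assms, symmetric]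
  using assms by (intro sum.cong refl) (simp add: leibniz_term_def mask_sel_snoc lists_of_length_def)

lemma contracted_leibniz_term_True:
  assumes "length cs = q"
  shows "contracted_leibniz_term g s v x q b (cs @ [True])
       = (\<Sum>c\<in>UNIV. (\<Sum>l\<in>lists_of_length (count_list cs True). prod_list (map (w_up g s v x) l) *
               nablas g (Suc (count_list cs True)) (w_up_tensor g s v) [c] (l @ [b]) x) *
            w_derivative_low g s v x (count_list cs False) c)"
  unfolding contracted_leibniz_term_def w_derivative_low_def sum_lists_weighted_mask_sel[OF assms, symmetric]
  using assms by (intro sum.cong refl) (simp add: leibniz_term_def mask_sel_snoc lists_of_length_def)

lemma sum_ginv_w_low: "x \<in> U \<Longrightarrow> (\<Sum>c\<in>UNIV. ginv g x c e * w_low s v x c) = w_up g s v x e"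
  unfolding w_up_eq_sum_ginv_w_low using ginv_sym[OF metric] by simp

lemma w_derivative_up_0: "w_derivative_up g s v x 0 c = w_up g s v x c"
  by (simp add: w_derivative_up_def w_up_tensor_def)

lemma w_derivative_low_0: "w_derivative_low g s v x 0 c = w_low s v x c"
  by (simp add: w_derivative_low_def w_low_tensor_def)

lemma w_norm_derivative_Suc_eq_sum_contracted_leibniz_term:
  assumes x: "x \<in> U"
  shows "w_norm_derivative g s v x (Suc q) b
       = (\<Sum>cs\<in>lists_of_length q. contracted_leibniz_term g s v x q b (cs @ [True]))
         + (\<Sum>cs\<in>lists_of_length q. contracted_leibniz_term g s v x q b (cs @ [False]))"
proof -
  let ?W = "w_up g s v x" and ?A = "w_up_tensor g s v" and ?B = "w_low_tensor s v"
  have "w_norm_derivative g s v x (Suc q) b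
      = (\<Sum>l\<in>lists_of_length q. prod_list (map ?W l) *
          (\<Sum>cs\<in>lists_of_length (Suc q). leibniz_term g ?A ?B cs (l @ [b]) x))"
    unfolding w_norm_derivative_def w_norm_tensor_def diff_Suc_1
    by (intro sum.cong refl)
      (simp add: nablas_contraction[OF metric smooth_tensor_w_up smooth_tensor_w_low x] lists_of_length_def)
  also have "\<dots> = (\<Sum>cs\<in>lists_of_length q. contracted_leibniz_term g s v x q b (cs @ [True])
                                         + contracted_leibniz_term g s v x q b (cs @ [False]))"
    unfolding contracted_leibniz_term_def sum.distrib[symmetric] sum_lists_of_length_snoc sum_UNIV_bool
    by (simp add: sum_distrib_left distrib_left) (rule sum.swap)
  finally show ?thesis by (simp add: sum.distrib)
qed

lemma contracted_leibniz_term_replicate_False: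
  assumes x: "x \<in> U"
  shows "contracted_leibniz_term g s v x q b (replicate q False @ [False]) = w_derivative_low g s v x (Suc q) b"
proof -
  have "contracted_leibniz_term g s v x q b (replicate q False @ [False])
      = (\<Sum>l\<in>lists_of_length q. prod_list (map (w_up g s v x) l) *
          (\<Sum>c\<in>UNIV. w_up g s v x c * nablas g (Suc q) (w_low_tensor s v) [] (l @ [b, c]) x))"
    unfolding contracted_leibniz_term_False[OF length_replicate]
    by (simp add: count_list_replicate w_derivative_up_0 sum_distrib_left mult_ac) (rule sum.swap)
  also have "\<dots> = w_derivative_low g s v x (Suc q) b"
    by (rule w_derivative_low_Suc[OF x])
  finally show ?thesis .
qed

lemma contracted_leibniz_term_replicate_True:
  assumes x: "x \<in> U"
  shows "contracted_leibniz_term g s v x q b (replicate q True @ [True]) = w_derivative_low g s v x (Suc q) b"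
proof -
  let ?W = "w_up g s v x" and ?A = "w_up_tensor g s v" and ?B = "w_low_tensor s v"
  have "contracted_leibniz_term g s v x q b (replicate q True @ [True])
      = (\<Sum>l\<in>lists_of_length q. prod_list (map ?W l) *
          (\<Sum>c\<in>UNIV. nablas g (Suc q) ?A [c] (l @ [b]) x * w_low s v x c))"
    unfolding contracted_leibniz_term_True[OF length_replicate]
    by (simp add: count_list_replicate w_derivative_low_0 sum_distrib_left sum_distrib_right mult_ac)
      (rule sum.swap)
  also have "\<dots> = (\<Sum>l\<in>lists_of_length q. prod_list (map ?W l) *
          (\<Sum>e\<in>UNIV. ?W e * nablas g (Suc q) ?B [] (l @ [b, e]) x))"
  proof (rule sum.cong[OF refl])
    fix l :: "'n list" assume "l \<in> lists_of_length q"
    then have len: "length (l @ [b]) = Suc q" by (simp add: lists_of_length_def)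
    have "(\<Sum>c\<in>UNIV. nablas g (Suc q) ?A [c] (l @ [b]) x * w_low s v x c)
        = (\<Sum>c\<in>UNIV. \<Sum>e\<in>UNIV. ginv g x c e * nablas g (Suc q) ?B [] (l @ [b, e]) x * w_low s v x c)"
      by (simp add: nablas_w_up_tensor[OF x len] sum_distrib_right)
    also have "\<dots> = (\<Sum>e\<in>UNIV. \<Sum>c\<in>UNIV. ginv g x c e * w_low s v x c * nablas g (Suc q) ?B [] (l @ [b, e]) x)"
      by (subst sum.swap) (simp add: mult_ac)
    also have "\<dots> = (\<Sum>e\<in>UNIV. ?W e * nablas g (Suc q) ?B [] (l @ [b, e]) x)"
      by (simp add: sum_distrib_right[symmetric] sum_ginv_w_low[OF x])
    finally show "prod_list (map ?W l) * (\<Sum>c\<in>UNIV. nablas g (Suc q) ?A [c] (l @ [b]) x * w_low s v x c)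
        = prod_list (map ?W l) * (\<Sum>e\<in>UNIV. ?W e * nablas g (Suc q) ?B [] (l @ [b, e]) x)" by simp
  qed
  also have "\<dots> = w_derivative_low g s v x (Suc q) b"
    by (rule w_derivative_low_Suc[OF x])
  finally show ?thesis .
qed

text \<open>Once all lower-order derivatives of \<open>w\<close> along itself vanish, only the two extreme
  Leibniz terms survive, and both equal the top-order one.\<close>

lemma w_norm_derivative_Suc:
  assumes x: "x \<in> U"
    and lower: "\<And>i c. 1 \<le> i \<Longrightarrow> i \<le> q \<Longrightarrow> w_derivative_low g s v x i c = 0"
  shows "w_norm_derivative g s v x (Suc q) b = 2 * w_derivative_low g s v x (Suc q) b"
proof -
  have "contracted_leibniz_term g s v x q b (cs @ [False]) = 0"
    if "cs \<in> lists_of_length q" "cs \<noteq> replicate q False" for cs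
  proof -
    have len: "length cs = q" using that by (simp add: lists_of_length_def)
    then have "1 \<le> count_list cs True" "count_list cs True \<le> q"
      using that(2) count_list_eq_0_iff_replicate[OF len, of True] count_list_True_False[of cs] by auto
    then have "w_derivative_up g s v x (count_list cs True) c = 0" for c
      using lower by (simp add: w_derivative_up_eq_sum_ginv[OF x])
    then show ?thesis unfolding contracted_leibniz_term_False[OF len] by simp
  qed
  then have "(\<Sum>cs\<in>lists_of_length q. contracted_leibniz_term g s v x q b (cs @ [False]))
      = (\<Sum>cs\<in>{replicate q False}. contracted_leibniz_term g s v x q b (cs @ [False]))"
    by (intro sum.mono_neutral_right[OF finite_lists_of_length]) (auto simp: lists_of_length_def)
  then have F: "(\<Sum>cs\<in>lists_of_length q. contracted_leibniz_term g s v x q b (cs @ [False]))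
              = w_derivative_low g s v x (Suc q) b"
    by (simp add: contracted_leibniz_term_replicate_False[OF x])
  have "contracted_leibniz_term g s v x q b (cs @ [True]) = 0"
    if "cs \<in> lists_of_length q" "cs \<noteq> replicate q True" for cs
  proof -
    have len: "length cs = q" using that by (simp add: lists_of_length_def)
    then have "1 \<le> count_list cs False" "count_list cs False \<le> q"
      using that(2) count_list_eq_0_iff_replicate[OF len, of False] count_list_True_False[of cs] by auto
    then show ?thesis unfolding contracted_leibniz_term_True[OF len] by (simp add: lower)
  qed
  then have "(\<Sum>cs\<in>lists_of_length q. contracted_leibniz_term g s v x q b (cs @ [True]))
      = (\<Sum>cs\<in>{replicate q True}. contracted_leibniz_term g s v x q b (cs @ [True]))"
    by (intro sum.mono_neutral_right[OF finite_lists_of_length]) (auto simp: lists_of_length_def)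
  then have T: "(\<Sum>cs\<in>lists_of_length q. contracted_leibniz_term g s v x q b (cs @ [True]))
              = w_derivative_low g s v x (Suc q) b"
    by (simp add: contracted_leibniz_term_replicate_True[OF x])
  show ?thesis
    unfolding w_norm_derivative_Suc_eq_sum_contracted_leibniz_term[OF x] F T by simp
qed

lemma pd_Gmat_eq_0:
  assumes G: "O_s2 U s (\<lambda>x. Gmat g s \<alpha> \<beta> x - (if \<alpha> = \<beta> then 1 else 0))" and x: "x \<in> \<Lambda>"
  shows "pd b (Gmat g s \<alpha> \<beta>) x = 0"
proof -
  have xU: "x \<in> U" and s0: "\<And>\<gamma>. s \<gamma> x = 0" and ds: "\<And>\<gamma>. s \<gamma> differentiable (at x)"
    using defmap x unfolding defining_map_def by (auto intro: smooth_on_imp_differentiable)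
  obtain T where T: "\<And>\<gamma> \<delta>. smooth_on U (T \<gamma> \<delta>)"
    and G_eq: "\<And>y. y \<in> U \<Longrightarrow> Gmat g s \<alpha> \<beta> y - (if \<alpha> = \<beta> then 1 else 0)
                                   = (\<Sum>\<gamma>\<in>UNIV. \<Sum>\<delta>\<in>UNIV. s \<gamma> y * s \<delta> y * T \<gamma> \<delta> y)"
    using G unfolding O_s2_def by blast
  have dT: "T \<gamma> \<delta> differentiable (at x)" for \<gamma> \<delta> using smooth_on_imp_differentiable[OF T xU] .
  have "pd b (Gmat g s \<alpha> \<beta>) x
      = pd b (\<lambda>y. (if \<alpha> = \<beta> then 1 else 0) + (\<Sum>\<gamma>\<in>UNIV. \<Sum>\<delta>\<in>UNIV. s \<gamma> y * s \<delta> y * T \<gamma> \<delta> y)) x"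
    by (rule pd_transform_open[OF open_U xU]) (simp add: G_eq[symmetric])
  also have "\<dots> = (\<Sum>\<gamma>\<in>UNIV. \<Sum>\<delta>\<in>UNIV. pd b (\<lambda>y. s \<gamma> y * s \<delta> y * T \<gamma> \<delta> y) x)"
    using ds dT by (simp add: pd_add pd_sum pd_const differentiable_sum differentiable_mult)
  also have "\<dots> = 0"
    using ds dT s0 by (simp add: pd_mult_mult_eq_0)
  finally show ?thesis .
qed

lemma w_norm_derivative_1_eq_0:
  assumes G_delta: "\<forall>\<alpha> \<beta>. O_s2 U s (\<lambda>x. Gmat g s \<alpha> \<beta> x - (if \<alpha> = \<beta> then 1 else 0))"
    and x: "x \<in> \<Lambda>"
  shows "w_norm_derivative g s v x 1 b = 0"
proof -
  have "x \<in> U" by (rule mem_U_if_mem_Lambda[OF x])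
  then have dG: "Gmat g s \<gamma> \<delta> differentiable (at x)" for \<gamma> \<delta>
    by (rule smooth_on_imp_differentiable[OF smooth_on_Gmat])
  have "w_norm_derivative g s v x 1 b = pd b (w_norm_tensor g s v [] []) x"
    by (simp add: w_norm_derivative_def nablas_Suc nabla_Cons_scalar)
  also have "\<dots> = pd b (\<lambda>y. \<Sum>p\<in>UNIV \<times> UNIV. (v (fst p) * v (snd p)) * Gmat g s (fst p) (snd p) y) x"
    unfolding w_norm_tensor_eq_sum_G_tensor[abs_def] G_tensor_def ..
  also have "\<dots> = 0"
    using dG pd_Gmat_eq_0[OF _ x] G_delta by (simp add: pd_sum pd_cmult differentiable_mult)
  finally show ?thesis .
qed

lemma nablas_w_norm_tensor:
  "x \<in> U \<Longrightarrow> nablas g p (w_norm_tensor g s v) ups ls x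
     = (\<Sum>\<gamma>\<in>UNIV. \<Sum>\<delta>\<in>UNIV. v \<gamma> * v \<delta> * nablas g p (G_tensor g s \<gamma> \<delta>) ups ls x)"
  unfolding w_norm_tensor_eq_sum_G_tensor[abs_def]
  by (subst nablas_linear[OF metric smooth_tensor_G_tensor])
    (simp_all add: sum.cartesian_product case_prod_beta)

text \<open>Contracting the hypothesis on the \<open>G\<^sub>\<gamma>\<^sub>\<delta>\<close> with \<open>v\<close> in all Greek slots turns it into the
  vanishing of the derivatives of \<open>w\<^sup>c w\<^sub>c = v\<^sup>\<gamma> v\<^sup>\<delta> G\<^sub>\<gamma>\<^sub>\<delta>\<close> along \<open>w\<close>.\<close>

lemma w_norm_derivative_eq_0:
  assumes x: "x \<in> \<Lambda>" and p: "1 \<le> p"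
    and hyp: "\<forall>\<alpha>s. length \<alpha>s = p + 1 \<longrightarrow>
         symmetrize (\<lambda>\<beta>s. \<Sum>as\<in>{as::'n list. length as = p - 1}.
             nprod g s x as \<beta>s * nablas g p (G_tensor g s (\<beta>s ! (p - 1)) (\<beta>s ! p)) [] (as @ [b]) x) \<alpha>s = 0"
  shows "w_norm_derivative g s v x p b = 0"
proof -
  obtain r where r: "p = Suc r" using p by (cases p) auto
  have xU: "x \<in> U" by (rule mem_U_if_mem_Lambda[OF x])
  define Z where "Z \<tau>s as = nablas g p (G_tensor g s (\<tau>s ! 0) (\<tau>s ! 1)) [] (as @ [b]) x" for \<tau>s as
  define F where "F \<beta>s = (\<Sum>as\<in>lists_of_length r. nprod g s x as \<beta>s * Z (drop r \<beta>s) as)" for \<beta>s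
  have "symmetrize F \<beta>s = 0" if "\<beta>s \<in> lists_of_length (r + 2)" for \<beta>s
  proof -
    have "symmetrize F \<beta>s = symmetrize (\<lambda>\<beta>s. \<Sum>as\<in>{as::'n list. length as = p - 1}.
             nprod g s x as \<beta>s * nablas g p (G_tensor g s (\<beta>s ! (p - 1)) (\<beta>s ! p)) [] (as @ [b]) x) \<beta>s"
      using that by (intro symmetrize_cong) (simp add: F_def Z_def r lists_of_length_def)
    then show ?thesis using hyp that r by (simp add: lists_of_length_def)
  qed
  then have "0 = (\<Sum>\<beta>s\<in>lists_of_length (r + 2). prod_list (map v \<beta>s) * symmetrize F \<beta>s)" by simp
  also have "\<dots> = (\<Sum>\<beta>s\<in>lists_of_length (r + 2). prod_list (map v \<beta>s) * F \<beta>s)"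
    by (rule sum_lists_symmetrize)
  also have "\<dots> = (\<Sum>as\<in>lists_of_length r. prod_list (map (w_up g s v x) as) *
      (\<Sum>\<tau>s\<in>lists_of_length 2. prod_list (map v \<tau>s) * Z \<tau>s as))"
    unfolding F_def by (rule sum_lists_weighted_nprod)
  also have "\<dots> = w_norm_derivative g s v x p b"
    unfolding w_norm_derivative_def Z_def r numeral_2_eq_2
    by (simp add: sum_lists_of_length_Suc nablas_w_norm_tensor[OF xU] sum_distrib_left mult_ac)
  finally show ?thesis by simp
qed

lemma w_derivative_low_eq_0:
  assumes G_delta: "\<forall>\<alpha> \<beta>. O_s2 U s (\<lambda>x. Gmat g s \<alpha> \<beta> x - (if \<alpha> = \<beta> then 1 else 0))"
    and hyp1: "\<forall>n. 2 \<le> n \<and> n \<le> m \<longrightarrow> (\<forall>x\<in>\<Lambda>. \<forall>b. \<forall>\<alpha>s. length \<alpha>s = n + 1 \<longrightarrow>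
         symmetrize (\<lambda>\<beta>s. \<Sum>as\<in>{as::'n list. length as = n - 1}.
             nprod g s x as \<beta>s *
             nablas g n (G_tensor g s (\<beta>s ! (n - 1)) (\<beta>s ! n)) [] (as @ [b]) x) \<alpha>s = 0)"
    and x: "x \<in> \<Lambda>"
  shows "1 \<le> p \<Longrightarrow> p \<le> m \<Longrightarrow> w_derivative_low g s v x p c = 0"
proof (induction p arbitrary: c rule: less_induct)
  case (less p)
  obtain q where q: "p = Suc q" using less.prems(1) by (cases p) auto
  have xU: "x \<in> U" by (rule mem_U_if_mem_Lambda[OF x])
  have "w_norm_derivative g s v x p c = 2 * w_derivative_low g s v x p c"
    unfolding q by (rule w_norm_derivative_Suc[OF xU]) (use less q in simp)
  moreover have "w_norm_derivative g s v x p c = 0"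
  proof (cases "p = 1")
    case True
    then show ?thesis using w_norm_derivative_1_eq_0[OF G_delta x] by simp
  next
    case False
    then show ?thesis using hyp1 less.prems x by (intro w_norm_derivative_eq_0[OF x less.prems(1)]) simp
  qed
  ultimately show ?case by simp
qed

lemma sum_weighted_nup_derivative:
  assumes x: "x \<in> U"
  shows "(\<Sum>\<beta>s\<in>lists_of_length (p + 1). prod_list (map v \<beta>s) *
           (\<Sum>as\<in>{as::'n list. length as = p}. nprod g s x as \<beta>s * nablas g p (nup_tensor g s (\<beta>s ! p)) [b] as x))
       = w_derivative_up g s v x p b"
proof -
  define Z where "Z \<tau>s as = nablas g p (nup_tensor g s (\<tau>s ! 0)) [b] as x" for \<tau>s as
  have "(\<Sum>\<beta>s\<in>lists_of_length (p + 1). prod_list (map v \<beta>s) *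
           (\<Sum>as\<in>{as::'n list. length as = p}. nprod g s x as \<beta>s * nablas g p (nup_tensor g s (\<beta>s ! p)) [b] as x))
      = (\<Sum>\<beta>s\<in>lists_of_length (p + 1). prod_list (map v \<beta>s) *
           (\<Sum>as\<in>lists_of_length p. nprod g s x as \<beta>s * Z (drop p \<beta>s) as))"
    by (intro sum.cong refl) (simp add: Z_def lists_of_length_def)
  also have "\<dots> = (\<Sum>as\<in>lists_of_length p. prod_list (map (w_up g s v x) as) *
      (\<Sum>\<tau>s\<in>lists_of_length 1. prod_list (map v \<tau>s) * Z \<tau>s as))"
    by (rule sum_lists_weighted_nprod)
  also have "\<dots> = w_derivative_up g s v x p b"
  proof -
    have "(\<lambda>ups ls y. \<Sum>\<beta>\<in>UNIV. v \<beta> * nup_tensor g s \<beta> ups ls y) = w_up_tensor g s v"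
      by (simp add: fun_eq_iff w_up_tensor_def w_up_def nup_tensor_def)
    moreover have "nablas g p (\<lambda>ups ls y. \<Sum>\<beta>\<in>UNIV. v \<beta> * nup_tensor g s \<beta> ups ls y) [b] as x
        = (\<Sum>\<beta>\<in>UNIV. v \<beta> * nablas g p (nup_tensor g s \<beta>) [b] as x)" for as
      by (rule nablas_linear[OF metric _ x]) (rule smooth_tensor_nup_tensor)
    ultimately have "(\<Sum>\<beta>\<in>UNIV. v \<beta> * nablas g p (nup_tensor g s \<beta>) [b] as x) = nablas g p (w_up_tensor g s v) [b] as x"
      for as by simp
    then show ?thesis
      unfolding w_derivative_up_def Z_def by (simp add: sum_lists_of_length_Suc)
  qed
  finally show ?thesis .
qed

end

theorem mainTheorem12:
  fixes U :: "(real^'n::finite) set"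
    and g :: "real^'n \<Rightarrow> 'n \<Rightarrow> 'n \<Rightarrow> real"
    and s :: "'k::finite \<Rightarrow> real^'n \<Rightarrow> real"
    and \<Lambda> :: "(real^'n) set"
    and m :: nat
  assumes metric: "riem_metric U g"
    and defmap: "defining_map U s \<Lambda>"
    and m2: "m \<ge> 2"
    and G_delta: "\<forall>\<alpha> \<beta>. O_s2 U s (\<lambda>x. Gmat g s \<alpha> \<beta> x - (if \<alpha> = \<beta> then 1 else 0))"
    and hyp1: "\<forall>n. 2 \<le> n \<and> n \<le> m \<longrightarrow> (\<forall>x\<in>\<Lambda>. \<forall>b. \<forall>\<alpha>s. length \<alpha>s = n + 1 \<longrightarrow>
         symmetrize (\<lambda>\<beta>s. \<Sum>as\<in>{as::'n list. length as = n - 1}.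
             nprod g s x as \<beta>s *
             nablas g n (G_tensor g s (\<beta>s ! (n - 1)) (\<beta>s ! n)) [] (as @ [b]) x) \<alpha>s = 0)"
    and hyp2: "\<forall>n. 2 \<le> n \<and> n \<le> m \<longrightarrow> (\<forall>x\<in>\<Lambda>. \<forall>\<delta>. \<forall>\<alpha>s. length \<alpha>s = n + 1 \<longrightarrow>
         symmetrize (\<lambda>\<beta>s. \<Sum>as\<in>{as::'n list. length as = n}.
             nprod g s x as \<beta>s *
             nablas g n (G_tensor g s (\<beta>s ! n) \<delta>) [] as x) \<alpha>s = 0)"
  shows "\<forall>p. 1 \<le> p \<and> p \<le> m \<longrightarrow> (\<forall>x\<in>\<Lambda>. \<forall>b. \<forall>\<alpha>s. length \<alpha>s = p + 1 \<longrightarrow>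
         symmetrize (\<lambda>\<beta>s. \<Sum>as\<in>{as::'n list. length as = p}.
             nprod g s x as \<beta>s *
             nablas g p (nup_tensor g s (\<beta>s ! p)) [b] as x) \<alpha>s = 0)"
proof (intro allI impI ballI)
  fix p x b and \<alpha>s :: "'k list"
  assume p: "1 \<le> p \<and> p \<le> m" and x: "x \<in> \<Lambda>" and len: "length \<alpha>s = p + 1"
  have xU: "x \<in> U" by (rule mem_U_if_mem_Lambda[OF metric defmap x])
  show "symmetrize (\<lambda>\<beta>s. \<Sum>as\<in>{as::'n list. length as = p}.
          nprod g s x as \<beta>s * nablas g p (nup_tensor g s (\<beta>s ! p)) [b] as x) \<alpha>s = 0"
  proof (rule symmetrize_eq_0_if_diagonal_eq_0[OF _ len])
    fix v :: "'k \<Rightarrow> real"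
    have "w_derivative_low g s v x p e = 0" for e
      using w_derivative_low_eq_0[OF metric defmap G_delta hyp1 x] p by blast
    then have "w_derivative_up g s v x p b = 0"
      by (simp add: w_derivative_up_eq_sum_ginv[OF metric defmap xU])
    then show "(\<Sum>\<beta>s\<in>lists_of_length (p + 1). prod_list (map v \<beta>s) *
          (\<Sum>as\<in>{as::'n list. length as = p}. nprod g s x as \<beta>s * nablas g p (nup_tensor g s (\<beta>s ! p)) [b] as x)) = 0"
      using sum_weighted_nup_derivative[OF metric defmap xU] by simp
  qed
qed

end
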